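(* Let $\mathcal{H}_A,\mathcal{H}_B$ be finite-dimensional Hilbert spaces with a fixed reference basis $\{|i\rangle_A\}_{i=1}^{d_A}$ of $\mathcal{H}_A$, and let $\rho_{AB}=\sum_{i,j}|i\rangle\langle j|_A\otimes\rho^B_{ij}$ be a state. If there exist unitaries $U^B_1,\dots,U^B_{d_A}$ on $\mathcal{H}_B$ (equivalently, a unitary $U_{AB}=\sum_i|i\rangle\langle i|_A\otimes U^B_i$) such that $U^B_i\rho^B_{ij}U^{B\dagger}_j=|\rho^B_{ij}|$ for all $i,j$, then $$C^{A|B}_{\max}(\rho_{AB})=\log\left(1+C^{A|B}_{l_1}(\rho_{AB})\right).$$
   Context: $|P|=\sqrt{P^\dagger P}$ and $\|P\|_{\mathrm{tr}}=\mathrm{Tr}|P|$. $D_{\max}(\rho\|\sigma)=\min\{\lambda\ge0:\rho\leq2^\lambda\sigma\}$. The set $\mathcal{IQ}$ consists of states $\sum_kp_k\sigma^A_k\otimes\tau^B_k$ with $\sigma^A_k$ diagonal in $\{|i\rangle_A\}$ and $\tau^B_k$ arbitrary states; $C^{A|B}_{\max}(\rho_{AB})=\min_{\sigma\in\mathcal{IQ}}D_{\max}(\rho_{AB}\|\sigma)$; $C^{A|B}_{l_1}(\rho_{AB})=\sum_{i\neq j}\|\rho^B_{ij}\|_{\mathrm{tr}}$. Logarithms are base 2. *)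

theory Defs
  imports "Jordan_Normal_Form.Schur_Decomposition" "HOL-Library.Extended_Real"
begin

text \<open>Matrices are complex matrices of the JNF library. The bipartite space
H_A tensor H_B is identified with C^(dA*dB), basis vector |i>_A tensor |b>_B
having index i*dB + b (i < dA, b < dB).\<close>

definition mtrace :: "complex mat \<Rightarrow> complex" where
  "mtrace M = (\<Sum>i<dim_row M. M $$ (i, i))"

definition psd :: "complex mat \<Rightarrow> bool" where
  "psd M \<longleftrightarrow> M \<in> carrier_mat (dim_row M) (dim_row M) \<and>
     (\<forall>v \<in> carrier_vec (dim_row M).
        (\<Sum>i<dim_row M. \<Sum>j<dim_row M. cnj (v $ i) * M $$ (i, j) * v $ j) \<in> \<real> \<and>
        0 \<le> Re (\<Sum>i<dim_row M. \<Sum>j<dim_row M. cnj (v $ i) * M $$ (i, j) * v $ j))"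

definition loewner_le :: "complex mat \<Rightarrow> complex mat \<Rightarrow> bool" where
  "loewner_le A B \<longleftrightarrow> dim_row A = dim_row B \<and> dim_col A = dim_col B \<and> psd (B - A)"

definition is_state :: "nat \<Rightarrow> complex mat \<Rightarrow> bool" where
  "is_state n M \<longleftrightarrow> M \<in> carrier_mat n n \<and> psd M \<and> mtrace M = 1"

definition is_unitary :: "nat \<Rightarrow> complex mat \<Rightarrow> bool" where
  "is_unitary n U \<longleftrightarrow> U \<in> carrier_mat n n \<and> U * mat_adjoint U = 1\<^sub>m n"

definition mat_abs :: "complex mat \<Rightarrow> complex mat" where
  "mat_abs P = (THE Q. psd Q \<and> dim_row Q = dim_col P \<and> Q * Q = mat_adjoint P * P)"

definition trace_norm :: "complex mat \<Rightarrow> real" where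
  "trace_norm P = Re (mtrace (mat_abs P))"

definition kron :: "complex mat \<Rightarrow> complex mat \<Rightarrow> complex mat" where
  "kron A B = mat (dim_row A * dim_row B) (dim_col A * dim_col B)
     (\<lambda>(r, c). A $$ (r div dim_row B, c div dim_col B) * B $$ (r mod dim_row B, c mod dim_col B))"

definition block :: "nat \<Rightarrow> complex mat \<Rightarrow> nat \<Rightarrow> nat \<Rightarrow> complex mat" where
  "block dB \<rho> i j = mat dB dB (\<lambda>(a, b). \<rho> $$ (i * dB + a, j * dB + b))"

definition is_diagonal :: "complex mat \<Rightarrow> bool" where
  "is_diagonal M \<longleftrightarrow> (\<forall>i<dim_row M. \<forall>j<dim_col M. i \<noteq> j \<longrightarrow> M $$ (i, j) = 0)"

text \<open>The set IQ: finite convex combinations of sigma_k tensor tau_k, sigma_k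
incoherent (diagonal) states on A, tau_k arbitrary states on B.\<close>
definition IQ :: "nat \<Rightarrow> nat \<Rightarrow> complex mat set" where
  "IQ dA dB = {\<sigma>. \<exists>(n::nat) (p::nat \<Rightarrow> real) s t.
      (\<forall>k<n. 0 \<le> p k \<and> is_state dA (s k) \<and> is_diagonal (s k) \<and> is_state dB (t k)) \<and>
      (\<Sum>k<n. p k) = 1 \<and>
      \<sigma> = mat (dA * dB) (dA * dB) (\<lambda>rc. \<Sum>k<n. complex_of_real (p k) * kron (s k) (t k) $$ rc)}"

text \<open>D_max(rho||sigma) = min{lambda >= 0 : rho <= 2^lambda sigma}; infinite if no such lambda.\<close>
definition D_max :: "complex mat \<Rightarrow> complex mat \<Rightarrow> ereal" where
  "D_max \<rho> \<sigma> = Inf {ereal l | l. 0 \<le> l \<and> loewner_le \<rho> (complex_of_real (2 powr l) \<cdot>\<^sub>m \<sigma>)}"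

definition C_max :: "nat \<Rightarrow> nat \<Rightarrow> complex mat \<Rightarrow> ereal" where
  "C_max dA dB \<rho> = Inf (D_max \<rho> ` IQ dA dB)"

definition C_l1 :: "nat \<Rightarrow> nat \<Rightarrow> complex mat \<Rightarrow> real" where
  "C_l1 dA dB \<rho> = (\<Sum>i<dA. \<Sum>j\<in>{..<dA} - {i}. trace_norm (block dB \<rho> i j))"

end

theory Submission
  imports Defs
begin

text \<open>Let \<open>T = 1 + C\<^sub>l\<^sub>1(\<rho>) = \<Sum>\<^sub>i\<^sub>j tr |\<rho>\<^sub>i\<^sub>j|\<close>; we show \<open>\<rho> \<le> c \<sigma>\<close> with \<open>\<sigma>\<close> incoherent-quantum
  forces \<open>c \<ge> T\<close>, and that \<open>c = T\<close> is attained.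

  Lower bound: test \<open>c \<sigma> - \<rho> \<ge> 0\<close> against the vectors \<open>w\<^sub>b = \<Sum>\<^sub>i |i\<rangle> \<otimes> U\<^sub>i\<^sup>\<dagger> |b\<rangle>\<close> and sum over \<open>b\<close>.
  For any block matrix this sum is \<open>\<Sum>\<^sub>i\<^sub>j tr (U\<^sub>i M\<^sub>i\<^sub>j U\<^sub>j\<^sup>\<dagger>)\<close>; by the alignment hypothesis it is \<open>T\<close>
  for \<open>\<rho>\<close>, while for \<open>\<sigma>\<close>, whose off-diagonal blocks vanish, it is \<open>tr \<sigma> = 1\<close>.

  Upper bound: \<open>\<sigma>\<^sub>0 = T\<^sup>-\<^sup>1 \<Sum>\<^sub>i |i\<rangle>\<langle>i| \<otimes> U\<^sub>i\<^sup>\<dagger> (\<Sum>\<^sub>j |\<rho>\<^sub>i\<^sub>j|) U\<^sub>i\<close> is incoherent-quantum, and with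
  \<open>y\<^sub>i = U\<^sub>i v\<^sub>i\<close> one gets \<open>\<langle>v, (T \<sigma>\<^sub>0 - \<rho>) v\<rangle> = \<onehalf> \<Sum>\<^sub>i\<^sub>j \<langle>y\<^sub>i - y\<^sub>j, |\<rho>\<^sub>i\<^sub>j| (y\<^sub>i - y\<^sub>j)\<rangle> \<ge> 0\<close>,
  using \<open>|\<rho>\<^sub>i\<^sub>j| = |\<rho>\<^sub>j\<^sub>i|\<close>.\<close>

section \<open>Adjoints and unitaries\<close>

lemma mat_adjoint_alt:
  "mat_adjoint (A::complex mat) = mat (dim_col A) (dim_row A) (\<lambda>(i,j). cnj (A $$ (j,i)))"
  by (rule eq_matI, auto simp: mat_adjoint_def mat_of_rows_def)

lemma mat_adjoint_dim [simp]:
  "dim_row (mat_adjoint (A::complex mat)) = dim_col A" "dim_col (mat_adjoint A) = dim_row A"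
  by (simp_all add: mat_adjoint_alt)

lemma mat_adjoint_index [simp]:
  "i < dim_col A \<Longrightarrow> j < dim_row A \<Longrightarrow> mat_adjoint (A::complex mat) $$ (i,j) = cnj (A $$ (j,i))"
  by (simp add: mat_adjoint_alt)

lemma mat_adjoint_carrier [simp]: "(A::complex mat) \<in> carrier_mat n m \<Longrightarrow> mat_adjoint A \<in> carrier_mat m n"
  by (intro carrier_matI, auto)

lemma mat_adjoint_adjoint [simp]: "mat_adjoint (mat_adjoint (A::complex mat)) = A"
  by (rule eq_matI, auto)

lemma mat_adjoint_one [simp]: "mat_adjoint (1\<^sub>m n :: complex mat) = 1\<^sub>m n"
  by (rule eq_matI, auto)

lemma mat_adjoint_mult: "(A::complex mat) \<in> carrier_mat n k \<Longrightarrow> B \<in> carrier_mat k m \<Longrightarrow>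
   mat_adjoint (A * B) = mat_adjoint B * mat_adjoint A"
  by (rule eq_matI) (auto simp: scalar_prod_def mult.commute)

lemma mat_adjoint_mult3:
  assumes "(A::complex mat) \<in> carrier_mat n n" "B \<in> carrier_mat n n" "C \<in> carrier_mat n n"
  shows "mat_adjoint (A * B * C) = mat_adjoint C * mat_adjoint B * mat_adjoint A"
proof -
  have "mat_adjoint (A * B * C) = mat_adjoint C * mat_adjoint (A * B)"
    using assms by (intro mat_adjoint_mult[of _ n n]) auto
  also have "mat_adjoint (A * B) = mat_adjoint B * mat_adjoint A"
    using assms by (intro mat_adjoint_mult[of _ n n]) auto
  finally show ?thesis using assms by (simp add: assoc_mult_mat[of _ n n _ n _ n] mult_carrier_mat)
qed

lemma mat_adjoint_minus: "(A::complex mat) \<in> carrier_mat n m \<Longrightarrow> B \<in> carrier_mat n m \<Longrightarrow>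
   mat_adjoint (A - B) = mat_adjoint A - mat_adjoint B"
  by (rule eq_matI, auto)

lemma mat_adjoint_four_block_mat:
  "(A::complex mat) \<in> carrier_mat n1 m1 \<Longrightarrow> B \<in> carrier_mat n1 m2 \<Longrightarrow>
   C \<in> carrier_mat n2 m1 \<Longrightarrow> D \<in> carrier_mat n2 m2 \<Longrightarrow>
   mat_adjoint (four_block_mat A B C D) =
     four_block_mat (mat_adjoint A) (mat_adjoint C) (mat_adjoint B) (mat_adjoint D)"
  by (rule eq_matI) auto

lemma is_unitary_adjoint_mult:
  "is_unitary n U \<Longrightarrow> mat_adjoint U * U = 1\<^sub>m n"
  unfolding is_unitary_def using mat_mult_left_right_inverse[of U n "mat_adjoint U"] by auto

lemma is_unitaryI:
  "(U::complex mat) \<in> carrier_mat n n \<Longrightarrow> mat_adjoint U * U = 1\<^sub>m n \<Longrightarrow> is_unitary n U"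
  unfolding is_unitary_def using mat_mult_left_right_inverse[of "mat_adjoint U" n U] by auto

lemma is_unitary_adjoint: "is_unitary n U \<Longrightarrow> is_unitary n (mat_adjoint U)"
  using is_unitary_adjoint_mult[of n U] unfolding is_unitary_def by simp

lemma is_unitary_mult:
  assumes U: "is_unitary n U" and V: "is_unitary n V"
  shows "is_unitary n (U * V)"
proof -
  have c: "U \<in> carrier_mat n n" "V \<in> carrier_mat n n"
    "mat_adjoint U \<in> carrier_mat n n" "mat_adjoint V \<in> carrier_mat n n"
    using U V by (auto simp: is_unitary_def)
  have "U * V * mat_adjoint (U * V) = U * (V * mat_adjoint V) * mat_adjoint U"
    unfolding mat_adjoint_mult[OF c(1,2)] using c
    by (simp add: assoc_mult_mat[of _ n n _ n _ n] mult_carrier_mat[of _ n n])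
  thus ?thesis using U V c by (simp add: is_unitary_def)
qed

lemma unitary_conj_cancel:
  assumes V: "is_unitary n V" and A: "A \<in> carrier_mat n n"
  shows "V * (mat_adjoint V * A * V) * mat_adjoint V = A"
proof -
  have c: "V \<in> carrier_mat n n" "mat_adjoint V \<in> carrier_mat n n" using V by (auto simp: is_unitary_def)
  have "V * (mat_adjoint V * A * V) * mat_adjoint V = (V * mat_adjoint V) * A * (V * mat_adjoint V)"
    using c A by (simp add: assoc_mult_mat[of _ n n _ n _ n] mult_carrier_mat[of _ n n])
  thus ?thesis using V A by (simp add: is_unitary_def)
qed

lemma unitary_conj_mult:
  assumes V: "is_unitary n V" and A: "A \<in> carrier_mat n n" and B: "B \<in> carrier_mat n n"
  shows "(V * A * mat_adjoint V) * (V * B * mat_adjoint V) = V * (A * B) * mat_adjoint V"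
proof -
  have c: "V \<in> carrier_mat n n" "mat_adjoint V \<in> carrier_mat n n" using V by (auto simp: is_unitary_def)
  have BV: "B * mat_adjoint V \<in> carrier_mat n n" using B c by auto
  have "(V * A * mat_adjoint V) * (V * B * mat_adjoint V) = V * (A * (mat_adjoint V * (V * (B * mat_adjoint V))))"
    using V A B c by (simp add: assoc_mult_mat[of _ n n _ n _ n])
  also have "mat_adjoint V * (V * (B * mat_adjoint V)) = B * mat_adjoint V"
    using assoc_mult_mat[OF c(2,1) BV] is_unitary_adjoint_mult[OF V] left_mult_one_mat[OF BV] by simp
  also have "V * (A * (B * mat_adjoint V)) = V * (A * B) * mat_adjoint V"
    using c A B by (simp add: assoc_mult_mat[of _ n n _ n _ n])
  finally show ?thesis .
qed

section \<open>The sesquilinear form of a matrix\<close>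

lemma complex_nonneg_iff: "(0::complex) \<le> z \<longleftrightarrow> z \<in> \<real> \<and> 0 \<le> Re z"
  by (auto simp: less_eq_complex_def complex_is_Real_iff)

definition sesq :: "complex mat \<Rightarrow> complex vec \<Rightarrow> complex vec \<Rightarrow> complex" where
  "sesq M u w = (\<Sum>i<dim_row M. \<Sum>j<dim_col M. cnj (u $ i) * M $$ (i,j) * w $ j)"

lemma psd_iff_sesq:
  assumes "dim_row M = n"
  shows "psd M \<longleftrightarrow> M \<in> carrier_mat n n \<and> (\<forall>v \<in> carrier_vec n. 0 \<le> sesq M v v)"
proof (cases "M \<in> carrier_mat n n")
  case True
  then have "dim_col M = n" by auto
  then show ?thesis using True assms unfolding psd_def sesq_def complex_nonneg_iff by simp
qed (use assms in \<open>simp add: psd_def\<close>)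

lemma psd_sesq_nonneg: "psd M \<Longrightarrow> v \<in> carrier_vec (dim_row M) \<Longrightarrow> 0 \<le> sesq M v v"
  using psd_iff_sesq by blast

lemma psd_carrier: "psd M \<Longrightarrow> M \<in> carrier_mat (dim_row M) (dim_row M)"
  unfolding psd_def by blast

lemma sesq_mult:
  assumes "A \<in> carrier_mat n m" "B \<in> carrier_mat m k" "w \<in> carrier_vec k"
  shows "sesq (A * B) u w = sesq A u (B *\<^sub>v w)"
proof -
  have "sesq (A * B) u w = (\<Sum>i<n. \<Sum>j<k. \<Sum>l<m. cnj (u$i) * A$$(i,l) * B$$(l,j) * w$j)"
    unfolding sesq_def using assms
    by (auto simp: scalar_prod_def sum_distrib_left sum_distrib_right atLeast0LessThan mult_ac intro!: sum.cong)
  also have "\<dots> = (\<Sum>i<n. \<Sum>l<m. \<Sum>j<k. cnj (u$i) * A$$(i,l) * B$$(l,j) * w$j)"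
    by (rule sum.cong[OF refl], rule sum.swap)
  also have "\<dots> = sesq A u (B *\<^sub>v w)" unfolding sesq_def using assms
    by (auto simp: scalar_prod_def sum_distrib_left atLeast0LessThan mult_ac intro!: sum.cong)
  finally show ?thesis .
qed

lemma sesq_adjoint_mult:
  assumes "A \<in> carrier_mat m n" "B \<in> carrier_mat m k" "u \<in> carrier_vec n"
  shows "sesq (mat_adjoint A * B) u w = sesq B (A *\<^sub>v u) w"
proof -
  have "sesq (mat_adjoint A * B) u w = (\<Sum>i<n. \<Sum>j<k. \<Sum>l<m. cnj (u$i) * cnj (A$$(l,i)) * B$$(l,j) * w$j)"
    unfolding sesq_def using assms
    by (auto simp: scalar_prod_def sum_distrib_left sum_distrib_right atLeast0LessThan mult_ac intro!: sum.cong)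
  also have "\<dots> = (\<Sum>i<n. \<Sum>l<m. \<Sum>j<k. cnj (u$i) * cnj (A$$(l,i)) * B$$(l,j) * w$j)"
    by (rule sum.cong[OF refl], rule sum.swap)
  also have "\<dots> = (\<Sum>l<m. \<Sum>i<n. \<Sum>j<k. cnj (u$i) * cnj (A$$(l,i)) * B$$(l,j) * w$j)"
    by (rule sum.swap)
  also have "\<dots> = (\<Sum>l<m. \<Sum>j<k. \<Sum>i<n. cnj (u$i) * cnj (A$$(l,i)) * B$$(l,j) * w$j)"
    by (rule sum.cong[OF refl], rule sum.swap)
  also have "\<dots> = sesq B (A *\<^sub>v u) w" unfolding sesq_def using assms
    by (auto simp: scalar_prod_def sum_distrib_left sum_distrib_right atLeast0LessThan mult_ac intro!: sum.cong)
  finally show ?thesis .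
qed

lemma sesq_conj:
  assumes A: "A \<in> carrier_mat m n" and Z: "Z \<in> carrier_mat m k" and B: "B \<in> carrier_mat k l"
    and x: "x \<in> carrier_vec n" and y: "y \<in> carrier_vec l"
  shows "sesq (mat_adjoint A * Z * B) x y = sesq Z (A *\<^sub>v x) (B *\<^sub>v y)"
proof -
  have "mat_adjoint A * Z \<in> carrier_mat n k" using A Z by auto
  then show ?thesis using sesq_mult[OF _ B y] sesq_adjoint_mult[OF A Z x] by simp
qed

lemma sesq_add_left: "u1 \<in> carrier_vec (dim_row M) \<Longrightarrow> u2 \<in> carrier_vec (dim_row M) \<Longrightarrow>
  sesq M (u1 + u2) w = sesq M u1 w + sesq M u2 w"
  unfolding sesq_def by (simp add: algebra_simps sum.distrib)

lemma sesq_add_right: "w1 \<in> carrier_vec (dim_col M) \<Longrightarrow> w2 \<in> carrier_vec (dim_col M) \<Longrightarrow>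
  sesq M u (w1 + w2) = sesq M u w1 + sesq M u w2"
  unfolding sesq_def by (simp add: algebra_simps sum.distrib)

lemma sesq_minus_left: "u1 \<in> carrier_vec (dim_row M) \<Longrightarrow> u2 \<in> carrier_vec (dim_row M) \<Longrightarrow>
  sesq M (u1 - u2) w = sesq M u1 w - sesq M u2 w"
  unfolding sesq_def by (simp add: algebra_simps sum_subtractf)

lemma sesq_minus_right: "w1 \<in> carrier_vec (dim_col M) \<Longrightarrow> w2 \<in> carrier_vec (dim_col M) \<Longrightarrow>
  sesq M u (w1 - w2) = sesq M u w1 - sesq M u w2"
  unfolding sesq_def by (simp add: algebra_simps sum_subtractf)

lemma sesq_smult_left: "u \<in> carrier_vec (dim_row M) \<Longrightarrow> sesq M (c \<cdot>\<^sub>v u) w = cnj c * sesq M u w"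
  unfolding sesq_def by (simp add: algebra_simps sum_distrib_left)

lemma sesq_smult_right: "w \<in> carrier_vec (dim_col M) \<Longrightarrow> sesq M u (c \<cdot>\<^sub>v w) = c * sesq M u w"
  unfolding sesq_def by (simp add: algebra_simps sum_distrib_left)

lemma sesq_mat_minus:
  "M1 \<in> carrier_mat n m \<Longrightarrow> M2 \<in> carrier_mat n m \<Longrightarrow> sesq (M1 - M2) u w = sesq M1 u w - sesq M2 u w"
  unfolding sesq_def by (simp add: algebra_simps sum_subtractf)

lemma sesq_mat_smult: "sesq (c \<cdot>\<^sub>m M) u w = c * sesq M u w"
  unfolding sesq_def by (simp add: algebra_simps sum_distrib_left)

lemma sesq_mat_sum:
  assumes T: "\<And>k. k < m \<Longrightarrow> T k \<in> carrier_mat d d"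
  shows "sesq (mat d d (\<lambda>ac. \<Sum>k<m. c k * T k $$ ac)) x y = (\<Sum>k<m. c k * sesq (T k) x y)"
proof -
  have "sesq (mat d d (\<lambda>ac. \<Sum>k<m. c k * T k $$ ac)) x y =
      (\<Sum>a<d. \<Sum>b<d. \<Sum>k<m. c k * (cnj (x$a) * T k $$ (a,b) * y$b))"
    unfolding sesq_def by (auto simp: sum_distrib_left sum_distrib_right mult_ac intro!: sum.cong)
  also have "\<dots> = (\<Sum>a<d. \<Sum>k<m. \<Sum>b<d. c k * (cnj (x$a) * T k $$ (a,b) * y$b))"
    by (rule sum.cong[OF refl], rule sum.swap)
  also have "\<dots> = (\<Sum>k<m. \<Sum>a<d. \<Sum>b<d. c k * (cnj (x$a) * T k $$ (a,b) * y$b))"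
    by (rule sum.swap)
  also have "\<dots> = (\<Sum>k<m. c k * sesq (T k) x y)" unfolding sesq_def using T
    by (auto simp: sum_distrib_left intro!: sum.cong)
  finally show ?thesis .
qed

lemma sesq_unit_vec:
  assumes M: "M \<in> carrier_mat n n" and a: "a < n" and b: "b < n"
  shows "sesq M (unit_vec n a) (unit_vec n b) = M $$ (a,b)"
proof -
  have "sesq M (unit_vec n a) (unit_vec n b) =
      (\<Sum>i<n. \<Sum>j<n. (if i = a then 1 else 0) * M $$ (i,j) * (if j = b then 1 else 0))"
    unfolding sesq_def using M a b by (intro sum.cong refl) auto
  also have "\<dots> = (\<Sum>i<n. (if i = a then M $$ (i,b) else 0))"
    by (rule sum.cong[OF refl], insert b, auto simp: if_distrib sum.delta cong: if_cong)
  also have "\<dots> = M $$ (a,b)" using a by (simp add: sum.delta)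
  finally show ?thesis .
qed

lemma mtrace_eq_sum_sesq:
  "Q \<in> carrier_mat n n \<Longrightarrow> mtrace Q = (\<Sum>a<n. sesq Q (unit_vec n a) (unit_vec n a))"
  unfolding mtrace_def using sesq_unit_vec[of Q n] by (intro sum.cong, auto)

lemma hermitian_if_sesq_real:
  assumes M: "M \<in> carrier_mat n n" and R: "\<forall>v\<in>carrier_vec n. sesq M v v \<in> \<real>"
  shows "mat_adjoint M = M"
proof (rule eq_matI)
  fix i j assume "i < dim_row M" "j < dim_col M"
  hence i: "i < n" and j: "j < n" using M by auto
  have dM: "dim_row M = n" "dim_col M = n" using M by auto
  define ei where "ei = (unit_vec n i :: complex vec)"
  define ej where "ej = (unit_vec n j :: complex vec)"
  have e: "ei \<in> carrier_vec n" "ej \<in> carrier_vec n" unfolding ei_def ej_def by auto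
  have polar: "sesq M (ei + c \<cdot>\<^sub>v ej) (ei + c \<cdot>\<^sub>v ej) =
      M$$(i,i) + c * M$$(i,j) + cnj c * M$$(j,i) + cnj c * c * M$$(j,j)" for c
  proof -
    have c: "c \<cdot>\<^sub>v ej \<in> carrier_vec n" using e by auto
    have "sesq M (ei + c \<cdot>\<^sub>v ej) (ei + c \<cdot>\<^sub>v ej) =
        sesq M ei ei + sesq M (c \<cdot>\<^sub>v ej) ei + (sesq M ei (c \<cdot>\<^sub>v ej) + sesq M (c \<cdot>\<^sub>v ej) (c \<cdot>\<^sub>v ej))"
      using e c dM by (simp only: sesq_add_left sesq_add_right)
    also have "\<dots> = sesq M ei ei + cnj c * sesq M ej ei + (c * sesq M ei ej + c * (cnj c * sesq M ej ej))"
      using e dM by (simp only: sesq_smult_left sesq_smult_right carrier_vec_def mem_Collect_eq)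
    finally show ?thesis unfolding ei_def ej_def using sesq_unit_vec[OF M] i j by (simp add: algebra_simps)
  qed
  have "Im (M$$(i,i)) = 0" "Im (M$$(j,j)) = 0"
    using R[rule_format, OF e(1)] R[rule_format, OF e(2)] sesq_unit_vec[OF M i i] sesq_unit_vec[OF M j j]
    unfolding ei_def ej_def by (auto simp: complex_is_Real_iff)
  moreover have "Im (M$$(i,j)) + Im (M$$(j,i)) = 0" "Re (M$$(i,j)) - Re (M$$(j,i)) = 0"
    using R[rule_format, of "ei + 1 \<cdot>\<^sub>v ej"] R[rule_format, of "ei + \<i> \<cdot>\<^sub>v ej"] e calculation
    unfolding polar by (auto simp: complex_is_Real_iff)
  ultimately show "mat_adjoint M $$ (i,j) = M $$ (i,j)" using i j dM by (auto intro: complex_eqI)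
qed (insert M, auto)

lemma psd_hermitian: "psd M \<Longrightarrow> mat_adjoint M = M"
  using hermitian_if_sesq_real[OF psd_carrier] psd_sesq_nonneg nonnegative_complex_is_real by blast

section \<open>Spectral theorem for Hermitian matrices\<close>

lemma cscalar_self:
  assumes "(v::complex vec) \<in> carrier_vec n"
  shows "v \<bullet>c v = of_real (\<Sum>k<n. (cmod (v$k))\<^sup>2)"
proof -
  have "v \<bullet>c v = (\<Sum>k<n. v$k * cnj (v$k))"
    using assms unfolding scalar_prod_def by (auto simp: atLeast0LessThan)
  also have "\<dots> = (\<Sum>k<n. of_real ((cmod (v$k))\<^sup>2))"
    by (rule sum.cong[OF refl], rule complex_norm_square[symmetric])
  finally show ?thesis by (simp only: of_real_sum)
qed

lemma unit_eigenvector_exists: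
  assumes A: "(A::complex mat) \<in> carrier_mat n n" and n: "n > 0"
  shows "\<exists>u k. u \<in> carrier_vec n \<and> u \<bullet>c u = 1 \<and> A *\<^sub>v u = k \<cdot>\<^sub>v u"
proof -
  have "degree (char_poly A) > 0" using degree_monic_char_poly[OF A] n by auto
  hence "\<not> constant (poly (char_poly A))" by (simp add: constant_degree)
  from fundamental_theorem_of_algebra[OF this] obtain k where "poly (char_poly A) k = 0" by auto
  hence "eigenvalue A k" using eigenvalue_root_char_poly[OF A] by auto
  then obtain v where "eigenvector A v k" unfolding eigenvalue_def by auto
  hence v: "v \<in> carrier_vec n" "v \<noteq> 0\<^sub>v n" "A *\<^sub>v v = k \<cdot>\<^sub>v v" unfolding eigenvector_def using A by auto
  define s where "s = (\<Sum>i<n. (cmod (v$i))\<^sup>2)"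
  obtain i where i: "i < n" "v $ i \<noteq> 0" using v(1,2) by (metis eq_vecI carrier_vecD index_zero_vec)
  have "0 < (cmod (v$i))\<^sup>2" using i by auto
  also have "\<dots> \<le> s" unfolding s_def by (rule member_le_sum, insert i, auto)
  finally have s: "s > 0" .
  define u where "u = complex_of_real (1 / sqrt s) \<cdot>\<^sub>v v"
  have u: "u \<in> carrier_vec n" unfolding u_def using v by auto
  have "(\<Sum>j<n. (cmod (u$j))\<^sup>2) = (\<Sum>j<n. (cmod (v$j))\<^sup>2 / s)"
  proof (rule sum.cong[OF refl])
    fix j assume "j \<in> {..<n}"
    hence "cmod (u$j) = cmod (v$j) / sqrt s" using v s by (simp add: u_def norm_mult norm_divide)
    thus "(cmod (u$j))\<^sup>2 = (cmod (v$j))\<^sup>2 / s" using s by (simp add: power_divide)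
  qed
  also have "\<dots> = 1" using s unfolding s_def[symmetric] sum_divide_distrib[symmetric] by auto
  finally have "u \<bullet>c u = 1" using cscalar_self[OF u] by simp
  moreover have "A *\<^sub>v u = k \<cdot>\<^sub>v u"
    unfolding u_def using v A by (auto simp: mult_mat_vec smult_smult_assoc mult.commute)
  ultimately show ?thesis using u by blast
qed

lemma normalized_corthogonal_unitary:
  assumes orth: "corthogonal ws" and len: "length ws = n" and ws: "set ws \<subseteq> carrier_vec n"
  defines "W \<equiv> mat_of_cols n (map (\<lambda>w. complex_of_real (1 / sqrt (Re (w \<bullet>c w))) \<cdot>\<^sub>v w) ws)"
  shows "is_unitary n W"
    and "\<And>i. i < n \<Longrightarrow> col W i = complex_of_real (1 / sqrt (Re (ws!i \<bullet>c ws!i))) \<cdot>\<^sub>v ws ! i"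
proof -
  define c where "c i = 1 / sqrt (Re (ws!i \<bullet>c ws!i))" for i
  have wsc: "ws ! i \<in> carrier_vec n" if "i < n" for i using ws len that by auto
  have norm_pos: "0 < Re (ws!i \<bullet>c ws!i) \<and> ws!i \<bullet>c ws!i = of_real (Re (ws!i \<bullet>c ws!i))" if i: "i < n" for i
  proof -
    define s where "s = (\<Sum>k<n. (cmod (ws!i$k))\<^sup>2)"
    have e: "ws!i \<bullet>c ws!i = complex_of_real s" unfolding s_def by (rule cscalar_self[OF wsc[OF i]])
    have "ws!i \<bullet>c ws!i \<noteq> 0" using orth i len unfolding corthogonal_def by auto
    moreover have "s \<ge> 0" unfolding s_def by (rule sum_nonneg, auto)
    ultimately show ?thesis using e by auto
  qed
  have Wc: "W \<in> carrier_mat n n" unfolding W_def mat_of_cols_def using len by simp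
  show colW: "col W i = complex_of_real (c i) \<cdot>\<^sub>v ws ! i" if "i < n" for i
    unfolding W_def c_def using that wsc len by auto
  have "mat_adjoint W * W = 1\<^sub>m n"
  proof (rule eq_matI)
    fix i j assume "i < dim_row (1\<^sub>m n)" "j < dim_col (1\<^sub>m n)"
    hence i: "i < n" and j: "j < n" by auto
    have "(mat_adjoint W * W) $$ (i,j) = col W j \<bullet>c col W i"
      using Wc i j by (simp add: scalar_prod_def mult.commute)
    also have "\<dots> = complex_of_real (c i * c j) * (ws!j \<bullet>c ws!i)"
      unfolding colW[OF i] colW[OF j] using wsc[OF i] wsc[OF j]
      by (simp add: scalar_prod_def sum_distrib_left algebra_simps)
    also have "\<dots> = 1\<^sub>m n $$ (i,j)"
    proof (cases "i = j")
      case True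
      have "c i * c i * Re (ws!i \<bullet>c ws!i) = 1" unfolding c_def using norm_pos[OF i] by (simp add: divide_simps)
      then show ?thesis using True i norm_pos[OF i] by (metis index_one_mat(1) of_real_1 of_real_mult)
    next
      case False
      then show ?thesis using orth i j len unfolding corthogonal_def by auto
    qed
    finally show "(mat_adjoint W * W) $$ (i,j) = 1\<^sub>m n $$ (i,j)" .
  qed (use Wc in auto)
  then show "is_unitary n W" using Wc is_unitaryI by blast
qed

lemma unitary_completion:
  assumes u: "(u::complex vec) \<in> carrier_vec n" and u1: "u \<bullet>c u = 1"
  shows "\<exists>W. is_unitary n W \<and> col W 0 = u"
proof -
  have n: "n > 0" using u u1 by (cases n) (auto simp: scalar_prod_def)
  have u0: "u \<noteq> 0\<^sub>v n" using u1 by auto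
  interpret cof_vec_space n "TYPE(complex)" .
  note bc = basis_completion[OF u u0]
  obtain vs where bv: "basis_completion u = u # vs"
    using bc(6,7) n by (cases "basis_completion u", auto)
  define ws where "ws = gram_schmidt n (basis_completion u)"
  note gs = gram_schmidt_result[OF bc(2) bc(4) bc(5) ws_def]
  have lws: "length ws = n" using gs bc by auto
  have "hd ws = u" unfolding ws_def bv using gram_schmidt_hd[OF u] by simp
  hence "ws ! 0 = u" using n lws by (cases ws, auto)
  then show ?thesis using normalized_corthogonal_unitary[OF gs(2) lws gs(3)] n u u1 by auto
qed

text \<open>\<open>W\<close> completes a unit eigenvector of \<open>A\<close> to a unitary; Hermiticity of \<open>W\<^sup>\<dagger> A W\<close> then
  clears its first row as well as its first column.\<close>

lemma hermitian_deflation: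
  assumes A: "(A::complex mat) \<in> carrier_mat (Suc m) (Suc m)" and H: "mat_adjoint A = A"
  shows "\<exists>W B1 C. is_unitary (Suc m) W \<and> B1 \<in> carrier_mat 1 1 \<and> C \<in> carrier_mat m m \<and>
    mat_adjoint C = C \<and> A = W * four_block_mat B1 (0\<^sub>m 1 m) (0\<^sub>m m 1) C * mat_adjoint W"
proof -
  let ?n = "Suc m"
  obtain u k where u: "u \<in> carrier_vec ?n" "u \<bullet>c u = 1" "A *\<^sub>v u = k \<cdot>\<^sub>v u"
    using unit_eigenvector_exists[OF A] by auto
  obtain W where W: "is_unitary ?n W" "col W 0 = u" using unitary_completion[OF u(1,2)] by auto
  have Wc: "W \<in> carrier_mat ?n ?n" "mat_adjoint W \<in> carrier_mat ?n ?n" using W by (auto simp: is_unitary_def)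
  define B where "B = mat_adjoint W * A * W"
  have B: "B \<in> carrier_mat ?n ?n" unfolding B_def using Wc A by auto
  have BH: "mat_adjoint B = B" unfolding B_def using mat_adjoint_mult3[OF Wc(2) A Wc(1)] H by simp
  have "col B 0 = (mat_adjoint W * A) *\<^sub>v col W 0"
    unfolding B_def by (rule col_mult2, insert Wc A, auto)
  also have "\<dots> = mat_adjoint W *\<^sub>v (A *\<^sub>v col W 0)"
    using Wc A u W(2) by (simp add: assoc_mult_mat_vec[of _ ?n ?n A ?n])
  also have "\<dots> = k \<cdot>\<^sub>v (mat_adjoint W *\<^sub>v col W 0)"
    using Wc u W(2) by (auto simp: mult_mat_vec)
  also have "mat_adjoint W *\<^sub>v col W 0 = col (mat_adjoint W * W) 0"
    by (rule col_mult2[symmetric], insert Wc, auto)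
  finally have colB: "col B 0 = k \<cdot>\<^sub>v unit_vec ?n 0" using is_unitary_adjoint_mult[OF W(1)] by simp
  have Bi0: "B $$ (i,0) = 0" and B0i: "B $$ (0,i) = 0" if "0 < i" "i < ?n" for i
  proof -
    show "B $$ (i,0) = 0" using arg_cong[OF colB, of "\<lambda>v. v $ i"] B that by auto
    then show "B $$ (0,i) = 0" using arg_cong[OF BH, of "\<lambda>M. M $$ (0,i)"] B that by auto
  qed
  obtain B1 B2 B3 C where spl: "split_block B 1 1 = (B1,B2,B3,C)" by (cases "split_block B 1 1")
  have dB: "dim_row B = 1 + m" "dim_col B = 1 + m" using B by auto
  note sb = split_block[OF spl dB]
  have "B2 = 0\<^sub>m 1 m" "B3 = 0\<^sub>m m 1" using spl Bi0 B0i B unfolding split_block_def Let_def by (auto intro!: eq_matI)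
  moreover have "mat_adjoint C = C"
  proof (rule eq_matI)
    have Cidx: "C $$ (i,j) = B $$ (i+1, j+1)" if "i < m" "j < m" for i j
      using spl B that unfolding split_block_def Let_def by auto
    fix i j assume "i < dim_row C" "j < dim_col C"
    hence i: "i < m" and j: "j < m" using sb by auto
    have "mat_adjoint C $$ (i,j) = cnj (B $$ (j+1,i+1))" using sb i j Cidx by auto
    also have "\<dots> = mat_adjoint B $$ (i+1,j+1)" using B i j by auto
    finally show "mat_adjoint C $$ (i,j) = C $$ (i,j)" using BH Cidx i j by auto
  qed (insert sb, auto)
  moreover have "A = W * B * mat_adjoint W" unfolding B_def using unitary_conj_cancel[OF W(1) A] by simp
  ultimately show ?thesis using W(1) sb by auto
qed

lemma hermitian_unitary_diagonalization:
  "(A::complex mat) \<in> carrier_mat n n \<Longrightarrow> mat_adjoint A = A \<Longrightarrow>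
   \<exists>V D. is_unitary n V \<and> D \<in> carrier_mat n n \<and> diagonal_mat D \<and> A = V * D * mat_adjoint V"
proof (induction n arbitrary: A)
  case 0
  show ?case
    by (rule exI[of _ "1\<^sub>m 0"], rule exI[of _ A], insert 0, auto simp: diagonal_mat_def is_unitary_def intro!: eq_matI)
next
  case (Suc m)
  obtain W B1 C where WC: "is_unitary (Suc m) W" "B1 \<in> carrier_mat 1 1" "C \<in> carrier_mat m m"
    "mat_adjoint C = C" "A = W * four_block_mat B1 (0\<^sub>m 1 m) (0\<^sub>m m 1) C * mat_adjoint W"
    using hermitian_deflation[OF Suc.prems] by blast
  obtain V3 D3 where V3: "is_unitary m V3" "D3 \<in> carrier_mat m m" "diagonal_mat D3"
    "C = V3 * D3 * mat_adjoint V3" using Suc.IH[OF WC(3,4)] by blast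
  have V3c: "V3 \<in> carrier_mat m m" using V3(1) by (simp add: is_unitary_def)
  define V1 where "V1 = four_block_mat (1\<^sub>m 1) (0\<^sub>m 1 m) (0\<^sub>m m 1) V3"
  define D where "D = four_block_mat B1 (0\<^sub>m 1 m) (0\<^sub>m m 1) D3"
  have V1c: "V1 \<in> carrier_mat (Suc m) (Suc m)" and Dc: "D \<in> carrier_mat (Suc m) (Suc m)"
    unfolding V1_def D_def using V3c V3(2) WC(2) by auto
  have V1a: "mat_adjoint V1 = four_block_mat (1\<^sub>m 1) (0\<^sub>m 1 m) (0\<^sub>m m 1) (mat_adjoint V3)"
    unfolding V1_def using V3c by (subst mat_adjoint_four_block_mat[of _ 1 1 _ m _ m]) auto
  have "mat_adjoint V1 * V1 = 1\<^sub>m (Suc m)"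
    unfolding V1a unfolding V1_def using V3c is_unitary_adjoint_mult[OF V3(1)]
    by (subst mult_four_block_mat[of _ 1 1 _ m _ m]) auto
  hence V1: "is_unitary (Suc m) V1" using is_unitaryI[OF V1c] by simp
  have V1D: "V1 * D = four_block_mat B1 (0\<^sub>m 1 m) (0\<^sub>m m 1) (V3 * D3)"
    unfolding V1_def D_def using V3c V3(2) WC(2) by (subst mult_four_block_mat[of _ 1 1 _ m _ m]) auto
  have "V1 * D * mat_adjoint V1 = four_block_mat B1 (0\<^sub>m 1 m) (0\<^sub>m m 1) C"
    unfolding V1a V1D V3(4) using V3c V3(2) WC(2) by (subst mult_four_block_mat[of _ 1 1 _ m _ m]) auto
  moreover have "W * V1 * D * mat_adjoint (W * V1) = W * (V1 * D * mat_adjoint V1) * mat_adjoint W"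
    using WC(1) V1c Dc unfolding is_unitary_def
    by (simp add: mat_adjoint_mult[of W "Suc m" "Suc m"] assoc_mult_mat[of _ "Suc m" "Suc m" _ "Suc m" _ "Suc m"]
        mult_carrier_mat[of _ "Suc m" "Suc m"])
  ultimately have "A = W * V1 * D * mat_adjoint (W * V1)" using WC(5) by simp
  moreover have "diagonal_mat D" using V3(2,3) WC(2) unfolding D_def diagonal_mat_def by auto
  ultimately show ?case using is_unitary_mult[OF WC(1) V1] Dc by blast
qed

section \<open>Positive semidefinite matrices and the matrix absolute value\<close>

definition dmat :: "nat \<Rightarrow> (nat \<Rightarrow> real) \<Rightarrow> complex mat" where
  "dmat n d = mat n n (\<lambda>(i,j). if i = j then complex_of_real (d i) else 0)"

lemma dmat_carrier [simp]: "dmat n d \<in> carrier_mat n n"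
  unfolding dmat_def by auto

lemma dmat_dim [simp]: "dim_row (dmat n d) = n" "dim_col (dmat n d) = n"
  unfolding dmat_def by auto

lemma dmat_mult: "dmat n a * dmat n b = dmat n (\<lambda>k. a k * b k)"
proof (rule eq_matI)
  fix i j assume "i < dim_row (dmat n (\<lambda>k. a k * b k))" "j < dim_col (dmat n (\<lambda>k. a k * b k))"
  hence i: "i < n" and j: "j < n" by auto
  have "(dmat n a * dmat n b) $$ (i,j) =
      (\<Sum>k<n. (if i = k then complex_of_real (a i) else 0) * (if k = j then complex_of_real (b k) else 0))"
    using i j by (simp add: dmat_def scalar_prod_def atLeast0LessThan)
  also have "\<dots> = dmat n (\<lambda>k. a k * b k) $$ (i,j)"
    using i j by (auto simp: dmat_def if_distrib sum.delta cong: if_cong)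
  finally show "(dmat n a * dmat n b) $$ (i,j) = dmat n (\<lambda>k. a k * b k) $$ (i,j)" .
qed auto

lemma dmat_mult_unit_vec: "k < n \<Longrightarrow> dmat n l *\<^sub>v unit_vec n k = complex_of_real (l k) \<cdot>\<^sub>v unit_vec n k"
  by (intro eq_vecI, auto simp: dmat_def scalar_prod_def atLeast0LessThan if_distrib sum.delta cong: if_cong)

lemma sesq_dmat:
  assumes "y \<in> carrier_vec n"
  shows "sesq (dmat n d) y y = of_real (\<Sum>k<n. d k * (cmod (y$k))\<^sup>2)"
proof -
  have "sesq (dmat n d) y y = (\<Sum>i<n. \<Sum>j<n. if j = i then cnj (y$i) * complex_of_real (d i) * y$i else 0)"
    unfolding sesq_def by (intro sum.cong) (auto simp: dmat_def)
  also have "\<dots> = (\<Sum>i<n. complex_of_real (d i) * (y$i * cnj (y$i)))"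
    by (simp add: algebra_simps)
  also have "\<dots> = (\<Sum>i<n. of_real (d i * (cmod (y$i))\<^sup>2))"
    by (simp only: of_real_mult complex_norm_square)
  finally show ?thesis by (simp only: of_real_sum)
qed

lemma psd_dmat:
  assumes "\<And>k. k < n \<Longrightarrow> d k \<ge> 0"
  shows "psd (dmat n d)"
proof (unfold psd_iff_sesq[OF dmat_dim(1)], intro conjI ballI dmat_carrier)
  fix v :: "complex vec" assume v: "v \<in> carrier_vec n"
  have "0 \<le> (\<Sum>k<n. d k * (cmod (v$k))\<^sup>2)" using assms by (intro sum_nonneg) auto
  then show "0 \<le> sesq (dmat n d) v v" unfolding sesq_dmat[OF v] by (simp add: less_eq_complex_def)
qed

lemma mtrace_dmat: "mtrace (dmat n d) = of_real (\<Sum>k<n. d k)"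
  unfolding mtrace_def by (simp add: dmat_def)

lemma hermitian_decomp:
  assumes M: "(M::complex mat) \<in> carrier_mat n n" and H: "mat_adjoint M = M"
  shows "\<exists>V d. is_unitary n V \<and> M = V * dmat n d * mat_adjoint V"
proof -
  obtain V D where VD: "is_unitary n V" "D \<in> carrier_mat n n" "diagonal_mat D" "M = V * D * mat_adjoint V"
    using hermitian_unitary_diagonalization[OF M H] by blast
  have Vc: "V \<in> carrier_mat n n" "mat_adjoint V \<in> carrier_mat n n" using VD(1) by (auto simp: is_unitary_def)
  have DH: "mat_adjoint D = D"
  proof -
    have "mat_adjoint V * (V * D) = D"
      using assoc_mult_mat[OF Vc(2,1) VD(2), symmetric] is_unitary_adjoint_mult[OF VD(1)] VD(2) by simp
    hence "D = mat_adjoint V * M * V"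
      unfolding VD(4) using VD(2) Vc is_unitary_adjoint_mult[OF VD(1)]
      by (simp add: assoc_mult_mat[of _ n n _ n _ n])
    thus ?thesis using mat_adjoint_mult3[OF Vc(2) M Vc(1)] H by simp
  qed
  have diag_real: "D $$ (k,k) = of_real (Re (D $$ (k,k)))" if "k < n" for k
  proof -
    have "cnj (D $$ (k,k)) = D $$ (k,k)" using arg_cong[OF DH, of "\<lambda>X. X $$ (k,k)"] VD(2) that by simp
    then show ?thesis by (simp add: complex_eq_iff)
  qed
  define d where "d k = Re (D $$ (k,k))" for k
  have "D = dmat n d"
    using VD(2,3) diag_real unfolding diagonal_mat_def dmat_def d_def
    by (intro eq_matI) auto
  thus ?thesis using VD(1,4) by blast
qed

lemma psd_decomp:
  assumes P: "psd M" and M: "M \<in> carrier_mat n n"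
  shows "\<exists>V d. is_unitary n V \<and> (\<forall>k<n. d k \<ge> 0) \<and> M = V * dmat n d * mat_adjoint V"
proof -
  obtain V d where Vd: "is_unitary n V" "M = V * dmat n d * mat_adjoint V"
    using hermitian_decomp[OF M psd_hermitian[OF P]] by blast
  have Vc: "V \<in> carrier_mat n n" "mat_adjoint V \<in> carrier_mat n n" using Vd(1) by (auto simp: is_unitary_def)
  have "d k \<ge> 0" if k: "k < n" for k
  proof -
    define x where "x = V *\<^sub>v unit_vec n k"
    have x: "x \<in> carrier_vec n" unfolding x_def using Vc by auto
    have "mat_adjoint V *\<^sub>v x = unit_vec n k"
      unfolding x_def using assoc_mult_mat_vec[OF Vc(2,1), of "unit_vec n k"] is_unitary_adjoint_mult[OF Vd(1)] by auto
    then have "sesq M x x = complex_of_real (d k)"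
      using sesq_conj[OF Vc(2) dmat_carrier Vc(2) x x] sesq_unit_vec[OF dmat_carrier k k] Vd(2) k
      by (simp add: dmat_def)
    moreover have "0 \<le> sesq M x x" using P x M by (simp add: psd_sesq_nonneg)
    ultimately show ?thesis by (simp add: less_eq_complex_def)
  qed
  thus ?thesis using Vd by blast
qed

lemma psd_sqrt_exists:
  assumes P: "psd M" and M: "M \<in> carrier_mat n n"
  shows "\<exists>R. psd R \<and> R \<in> carrier_mat n n \<and> R * R = M"
proof -
  obtain V d where Vd: "is_unitary n V" "\<forall>k<n. d k \<ge> 0" "M = V * dmat n d * mat_adjoint V"
    using psd_decomp[OF P M] by blast
  have Vc: "V \<in> carrier_mat n n" "mat_adjoint V \<in> carrier_mat n n" using Vd(1) by (auto simp: is_unitary_def)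
  define R where "R = V * dmat n (\<lambda>k. sqrt (d k)) * mat_adjoint V"
  have R: "R \<in> carrier_mat n n" unfolding R_def using Vc by auto
  have "dmat n (\<lambda>k. sqrt (d k)) * dmat n (\<lambda>k. sqrt (d k)) = dmat n d"
    unfolding dmat_mult using Vd(2) by (auto simp: dmat_def intro!: eq_matI)
  then have "R * R = M" unfolding R_def Vd(3) using unitary_conj_mult[OF Vd(1)] by simp
  moreover have "psd R" unfolding psd_iff_sesq[of R n, OF carrier_matD(1)[OF R]]
  proof (intro conjI ballI R)
    fix x :: "complex vec" assume x: "x \<in> carrier_vec n"
    have "sesq R x x = sesq (dmat n (\<lambda>k. sqrt (d k))) (mat_adjoint V *\<^sub>v x) (mat_adjoint V *\<^sub>v x)"
      unfolding R_def using sesq_conj[OF Vc(2) dmat_carrier Vc(2) x x] by simp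
    also have "0 \<le> \<dots>"
      using psd_sesq_nonneg[OF psd_dmat] mult_mat_vec_carrier[OF Vc(2) x] Vd(2) by simp
    finally show "0 \<le> sesq R x x" .
  qed
  ultimately show ?thesis using R by blast
qed

text \<open>Diagonalise: a sum of nonnegative terms vanishes only termwise.\<close>

lemma psd_sesq_zero_imp_kernel:
  assumes P: "psd Q" and Q: "Q \<in> carrier_mat n n" and x: "x \<in> carrier_vec n" and z: "sesq Q x x = 0"
  shows "Q *\<^sub>v x = 0\<^sub>v n"
proof -
  obtain V d where Vd: "is_unitary n V" "\<forall>k<n. d k \<ge> 0" "Q = V * dmat n d * mat_adjoint V"
    using psd_decomp[OF P Q] by blast
  have Vc: "V \<in> carrier_mat n n" "mat_adjoint V \<in> carrier_mat n n" using Vd(1) by (auto simp: is_unitary_def)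
  define y where "y = mat_adjoint V *\<^sub>v x"
  have y: "y \<in> carrier_vec n" unfolding y_def using mult_mat_vec_carrier[OF Vc(2) x] .
  have "sesq Q x x = of_real (\<Sum>k<n. d k * (cmod (y$k))\<^sup>2)"
    using sesq_conj[OF Vc(2) dmat_carrier Vc(2) x x] sesq_dmat[OF y] Vd(3) unfolding y_def by simp
  then have "(\<Sum>k<n. d k * (cmod (y$k))\<^sup>2) = 0" using z by (metis of_real_eq_0_iff)
  then have "\<forall>k\<in>{..<n}. d k * (cmod (y$k))\<^sup>2 = 0"
    using sum_nonneg_eq_0_iff[of "{..<n}" "\<lambda>k. d k * (cmod (y$k))\<^sup>2"] Vd(2) by simp
  hence "dmat n d *\<^sub>v y = 0\<^sub>v n"
    using y by (intro eq_vecI, auto simp: dmat_def scalar_prod_def atLeast0LessThan if_distrib sum.delta cong: if_cong)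
  moreover have "Q *\<^sub>v x = V *\<^sub>v (dmat n d *\<^sub>v y)"
    unfolding Vd(3) y_def using assoc_mult_mat_vec[OF mult_carrier_mat[OF Vc(1) dmat_carrier] Vc(2) x]
      assoc_mult_mat_vec[OF Vc(1) dmat_carrier y[unfolded y_def]] by simp
  ultimately show ?thesis using Vc by auto
qed

text \<open>An eigenvector \<open>v\<close> of \<open>Q1 - Q2\<close> with eigenvalue \<open>c \<noteq> 0\<close> would give
  \<open>0 = \<langle>v, (Q1\<^sup>2 - Q2\<^sup>2) v\<rangle> = c (\<langle>v, Q1 v\<rangle> + \<langle>v, Q2 v\<rangle>)\<close>, forcing \<open>Q1 v = Q2 v = 0\<close>
  and hence \<open>c v = 0\<close>.\<close>

lemma psd_equal_squares_eigenvector: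
  assumes P1: "psd Q1" and Q1: "Q1 \<in> carrier_mat n n" and P2: "psd Q2" and Q2: "Q2 \<in> carrier_mat n n"
    and E: "Q1 * Q1 = Q2 * Q2" and v: "v \<in> carrier_vec n"
    and ev: "Q1 *\<^sub>v v - Q2 *\<^sub>v v = complex_of_real r \<cdot>\<^sub>v v" and r: "r \<noteq> 0"
  shows "v = 0\<^sub>v n"
proof -
  define c where "c = complex_of_real r"
  have H1: "mat_adjoint Q1 = Q1" and H2: "mat_adjoint Q2 = Q2" using P1 P2 psd_hermitian by auto
  have Q1v: "Q1 *\<^sub>v v = Q2 *\<^sub>v v + c \<cdot>\<^sub>v v"
  proof (rule eq_vecI)
    fix i assume "i < dim_vec (Q2 *\<^sub>v v + c \<cdot>\<^sub>v v)"
    then show "(Q1 *\<^sub>v v) $ i = (Q2 *\<^sub>v v + c \<cdot>\<^sub>v v) $ i"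
      using arg_cong[OF ev, of "\<lambda>w. w $ i"] Q1 Q2 v by (simp add: c_def diff_eq_eq add.commute)
  qed (use Q1 Q2 v in auto)
  have vc: "Q1 *\<^sub>v v \<in> carrier_vec n" "Q2 *\<^sub>v v \<in> carrier_vec n" "c \<cdot>\<^sub>v v \<in> carrier_vec n" using Q1 Q2 v by auto
  have "sesq (Q1 * Q1) v v = sesq (mat_adjoint Q1 * Q2) v v + c * sesq Q1 v v"
    using sesq_mult[OF Q1 Q1 v] sesq_mult[OF Q1 Q2 v] Q1v vc Q1 v H1 by (simp add: sesq_add_right sesq_smult_right)
  also have "sesq (mat_adjoint Q1 * Q2) v v = sesq (mat_adjoint Q2 * Q2) v v + cnj c * sesq Q2 v v"
    using sesq_adjoint_mult[OF Q1 Q2 v] sesq_adjoint_mult[OF Q2 Q2 v] Q1v vc Q2 v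
    by (simp add: sesq_add_left sesq_smult_left)
  finally have "sesq (Q1 * Q1) v v = sesq (Q2 * Q2) v v + c * (sesq Q1 v v + sesq Q2 v v)"
    unfolding H2 c_def by (simp add: algebra_simps)
  then have "sesq Q1 v v + sesq Q2 v v = 0" using r unfolding E c_def by simp
  moreover have "0 \<le> sesq Q1 v v" "0 \<le> sesq Q2 v v" using P1 P2 Q1 Q2 v by (auto simp: psd_sesq_nonneg)
  ultimately have "sesq Q1 v v = 0" "sesq Q2 v v = 0" by (auto simp: less_eq_complex_def complex_eq_iff)
  then have cv: "c \<cdot>\<^sub>v v = 0\<^sub>v n"
    using Q1v vc psd_sesq_zero_imp_kernel[OF P1 Q1 v] psd_sesq_zero_imp_kernel[OF P2 Q2 v] by auto
  show ?thesis
  proof (rule eq_vecI)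
    fix i assume "i < dim_vec (0\<^sub>v n :: complex vec)"
    then show "v $ i = 0\<^sub>v n $ i" using arg_cong[OF cv, of "\<lambda>w. w $ i"] r v by (simp add: c_def)
  qed (use v in auto)
qed

lemma psd_sqrt_unique:
  assumes P1: "psd Q1" and Q1: "Q1 \<in> carrier_mat n n" and P2: "psd Q2" and Q2: "Q2 \<in> carrier_mat n n"
    and E: "Q1 * Q1 = Q2 * Q2"
  shows "Q1 = Q2"
proof -
  define D where "D = Q1 - Q2"
  have D: "D \<in> carrier_mat n n" "mat_adjoint D = D"
    unfolding D_def using Q1 Q2 mat_adjoint_minus[OF Q1 Q2] P1 P2 psd_hermitian by auto
  obtain V l where Vl: "is_unitary n V" "D = V * dmat n l * mat_adjoint V"
    using hermitian_decomp[OF D] by blast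
  have Vc: "V \<in> carrier_mat n n" "mat_adjoint V \<in> carrier_mat n n" using Vl(1) by (auto simp: is_unitary_def)
  have l0: "l k = 0" if k: "k < n" for k
  proof (rule ccontr)
    assume lk: "l k \<noteq> 0"
    define v where "v = V *\<^sub>v unit_vec n k"
    have v: "v \<in> carrier_vec n" unfolding v_def using Vc by auto
    have Vav: "mat_adjoint V *\<^sub>v v = unit_vec n k" unfolding v_def
      using assoc_mult_mat_vec[OF Vc(2,1), of "unit_vec n k"] is_unitary_adjoint_mult[OF Vl(1)] by auto
    have "D *\<^sub>v v = V *\<^sub>v (dmat n l *\<^sub>v (mat_adjoint V *\<^sub>v v))"
      unfolding Vl(2) using assoc_mult_mat_vec[OF mult_carrier_mat[OF Vc(1) dmat_carrier] Vc(2) v]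
        assoc_mult_mat_vec[OF Vc(1) dmat_carrier mult_mat_vec_carrier[OF Vc(2) v]] by simp
    also have "\<dots> = complex_of_real (l k) \<cdot>\<^sub>v v"
      unfolding Vav using dmat_mult_unit_vec[OF k] Vc by (simp add: v_def mult_mat_vec)
    finally have "Q1 *\<^sub>v v - Q2 *\<^sub>v v = complex_of_real (l k) \<cdot>\<^sub>v v"
      unfolding D_def using minus_mult_distrib_mat_vec[OF Q1 Q2 v] by simp
    then have "v = 0\<^sub>v n" using psd_equal_squares_eigenvector[OF P1 Q1 P2 Q2 E v _ lk] by simp
    moreover have "mat_adjoint V *\<^sub>v 0\<^sub>v n = 0\<^sub>v n" using Vc by auto
    ultimately have "unit_vec n k = (0\<^sub>v n :: complex vec)" using Vav by simp
    then show False using arg_cong[of _ _ "\<lambda>w. w $ k"] k by fastforce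
  qed
  have "dmat n l = 0\<^sub>m n n" using l0 by (auto simp: dmat_def intro!: eq_matI)
  hence D0: "D = 0\<^sub>m n n" unfolding Vl(2) using Vc by simp
  show ?thesis
  proof (rule eq_matI)
    fix i j assume "i < dim_row Q2" "j < dim_col Q2"
    then show "Q1 $$ (i,j) = Q2 $$ (i,j)"
      using arg_cong[OF D0, of "\<lambda>X. X $$ (i,j)"] Q1 Q2 unfolding D_def by simp
  qed (use Q1 Q2 in auto)
qed

lemma psd_adjoint_mult_self:
  assumes P: "P \<in> carrier_mat n n"
  shows "psd (mat_adjoint P * P)"
proof -
  have one: "1\<^sub>m n = dmat n (\<lambda>_. 1)" by (intro eq_matI) (auto simp: dmat_def)
  have "0 \<le> sesq (mat_adjoint P * P) v v" if v: "v \<in> carrier_vec n" for v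
  proof -
    have "sesq (mat_adjoint P * P) v v = sesq (mat_adjoint P * 1\<^sub>m n * P) v v" using P by simp
    also have "\<dots> = sesq (1\<^sub>m n) (P *\<^sub>v v) (P *\<^sub>v v)" by (rule sesq_conj[OF P one_carrier_mat P v v])
    also have "\<dots> = sesq (dmat n (\<lambda>_. 1)) (P *\<^sub>v v) (P *\<^sub>v v)" unfolding one ..
    also have "0 \<le> \<dots>" using psd_dmat[of n "\<lambda>_. 1"] P v by (simp add: psd_sesq_nonneg)
    finally show ?thesis .
  qed
  then show ?thesis using P psd_iff_sesq[of "mat_adjoint P * P" n] by auto
qed

lemma mat_abs_psd:
  assumes P: "P \<in> carrier_mat n n"
  shows "psd (mat_abs P)" "mat_abs P \<in> carrier_mat n n"
proof -
  obtain R where R: "psd R" "R \<in> carrier_mat n n" "R * R = mat_adjoint P * P"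
    using psd_sqrt_exists[OF psd_adjoint_mult_self[OF P] mult_carrier_mat[OF mat_adjoint_carrier[OF P] P]] by auto
  have "mat_abs P = R" unfolding mat_abs_def
  proof (rule the_equality)
    fix Q assume Q: "psd Q \<and> dim_row Q = dim_col P \<and> Q * Q = mat_adjoint P * P"
    then have "Q \<in> carrier_mat n n" using P psd_carrier by force
    then show "Q = R" using psd_sqrt_unique[OF _ _ R(1,2)] Q R(3) by auto
  qed (use R P in auto)
  then show "psd (mat_abs P)" "mat_abs P \<in> carrier_mat n n" using R by auto
qed

lemma psd_mtrace_nonneg:
  assumes "psd Q" "Q \<in> carrier_mat n n"
  shows "0 \<le> mtrace Q"
  unfolding mtrace_eq_sum_sesq[OF assms(2)] using assms by (intro sum_nonneg) (simp add: psd_sesq_nonneg)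

lemma psd_mtrace_zero:
  assumes P: "psd Q" and Q: "Q \<in> carrier_mat n n" and t: "mtrace Q = 0"
  shows "Q = 0\<^sub>m n n"
proof -
  have nonneg: "0 \<le> sesq Q (unit_vec n a) (unit_vec n a)" if "a < n" for a
    using P Q that by (simp add: psd_sesq_nonneg)
  have "\<forall>a\<in>{..<n}. sesq Q (unit_vec n a) (unit_vec n a) = 0"
    using t nonneg unfolding mtrace_eq_sum_sesq[OF Q] by (subst (asm) sum_nonneg_eq_0_iff) auto
  then have col0: "Q *\<^sub>v unit_vec n a = 0\<^sub>v n" if "a < n" for a
    using psd_sesq_zero_imp_kernel[OF P Q] that by auto
  show ?thesis
  proof (rule eq_matI)
    fix i j assume "i < dim_row (0\<^sub>m n n :: complex mat)" "j < dim_col (0\<^sub>m n n :: complex mat)"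
    then have "i < n" "j < n" by auto
    then show "Q $$ (i,j) = 0\<^sub>m n n $$ (i,j)"
      using arg_cong[OF col0, of j "\<lambda>v. v $ i"] Q by (simp add: scalar_prod_right_unit)
  qed (use Q in auto)
qed

lemma psd_smult: "psd X \<Longrightarrow> 0 \<le> c \<Longrightarrow> psd (complex_of_real c \<cdot>\<^sub>m X)"
  using psd_iff_sesq[of X "dim_row X"] psd_iff_sesq[of "complex_of_real c \<cdot>\<^sub>m X" "dim_row X"]
  by (auto simp: sesq_mat_smult less_eq_complex_def)

lemma psd_conj:
  assumes P: "psd X" and X: "X \<in> carrier_mat n n" and V: "V \<in> carrier_mat n n"
  shows "psd (mat_adjoint V * X * V)"
proof -
  have "0 \<le> sesq (mat_adjoint V * X * V) x x" if x: "x \<in> carrier_vec n" for x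
    using sesq_conj[OF V X V x x] psd_sesq_nonneg[OF P] X mult_mat_vec_carrier[OF V x] by simp
  then show ?thesis using psd_iff_sesq[of "mat_adjoint V * X * V" n] X V by auto
qed

lemma psd_mat_sum:
  assumes "\<And>j. j < m \<Longrightarrow> psd (Q j)" and "\<And>j. j < m \<Longrightarrow> Q j \<in> carrier_mat n n"
  shows "psd (mat n n (\<lambda>ac. \<Sum>j<m. Q j $$ ac))"
proof -
  have "0 \<le> sesq (mat n n (\<lambda>ac. \<Sum>j<m. Q j $$ ac)) x x" if x: "x \<in> carrier_vec n" for x
  proof -
    have "0 \<le> sesq (Q j) x x" if "j < m" for j
      using psd_sesq_nonneg[OF assms(1)[OF that]] assms(2)[OF that] x by simp
    then show ?thesis using sesq_mat_sum[of m Q n "\<lambda>_. 1" x x] assms(2) by (auto intro!: sum_nonneg)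
  qed
  then show ?thesis using psd_iff_sesq[of "mat n n (\<lambda>ac. \<Sum>j<m. Q j $$ ac)" n] by auto
qed

lemma psd_eq_smult_state:
  assumes P: "psd Y" and Y: "Y \<in> carrier_mat d d" and d: "0 < d"
  shows "\<exists>t. is_state d t \<and> Y = complex_of_real (Re (mtrace Y)) \<cdot>\<^sub>m t"
proof (cases "mtrace Y = 0")
  case True
  define t where "t = dmat d (\<lambda>k. if k = 0 then 1 else 0)"
  have "mtrace t = 1" unfolding t_def mtrace_dmat using d by simp
  then have "is_state d t" unfolding is_state_def t_def by (auto intro: psd_dmat)
  moreover have "Y = complex_of_real (Re (mtrace Y)) \<cdot>\<^sub>m t"
    using psd_mtrace_zero[OF P Y True] True by (auto simp: t_def)
  ultimately show ?thesis by blast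
next
  case False
  define \<tau> where "\<tau> = Re (mtrace Y)"
  have tr: "mtrace Y = complex_of_real \<tau>" and "\<tau> > 0"
    using psd_mtrace_nonneg[OF P Y] False unfolding \<tau>_def by (auto simp: less_eq_complex_def complex_eq_iff)
  define t where "t = complex_of_real (1 / \<tau>) \<cdot>\<^sub>m Y"
  have "mtrace t = 1" using tr \<open>\<tau> > 0\<close> Y unfolding t_def mtrace_def by (simp add: sum_divide_distrib[symmetric])
  moreover have "psd t" unfolding t_def by (rule psd_smult[OF P]) (use \<open>\<tau> > 0\<close> in simp)
  ultimately have "is_state d t" using Y unfolding is_state_def t_def by auto
  moreover have "Y = complex_of_real \<tau> \<cdot>\<^sub>m t"
    using \<open>\<tau> > 0\<close> Y unfolding t_def by (auto intro!: eq_matI)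
  ultimately show ?thesis unfolding \<tau>_def by blast
qed

section \<open>Block matrices\<close>

lemma sum_nat_blocks: "(\<Sum>r<m*d. f r) = (\<Sum>i<m. \<Sum>a<d. f (i*d + a :: nat))"
proof -
  have "(\<Sum>r<m*d. f r) = (\<Sum>i<m. \<Sum>r\<in>{i*d..<i*d+d}. f r)" by (rule sum.nat_group[symmetric])
  also have "\<dots> = (\<Sum>i<m. \<Sum>a<d. f (i*d + a))"
  proof (rule sum.cong[OF refl])
    fix i
    have "(\<Sum>r\<in>{i*d..<i*d+d}. f r) = (\<Sum>r\<in>{0+i*d..<d+i*d}. f r)" by (simp add: add.commute)
    also have "\<dots> = (\<Sum>a\<in>{0..<d}. f (a + i*d))" by (rule sum.shift_bounds_nat_ivl)
    finally show "(\<Sum>r\<in>{i*d..<i*d+d}. f r) = (\<Sum>a<d. f (i*d + a))" by (simp add: atLeast0LessThan add.commute)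
  qed
  finally show ?thesis .
qed

lemma block_index_less: "(i::nat) < m \<Longrightarrow> a < d \<Longrightarrow> i*d + a < m*d"
proof -
  assume "i < m" "a < d"
  hence "i*d + a < (i+1)*d" by simp
  also have "\<dots> \<le> m*d" using \<open>i < m\<close> by (intro mult_right_mono) auto
  finally show ?thesis .
qed

definition block_vec :: "nat \<Rightarrow> complex vec \<Rightarrow> nat \<Rightarrow> complex vec" where
  "block_vec d u i = vec d (\<lambda>a. u $ (i*d + a))"

lemma block_vec_carrier [simp]: "block_vec d u i \<in> carrier_vec d"
  unfolding block_vec_def by auto

lemma block_carrier [simp]: "block d M i j \<in> carrier_mat d d"
  unfolding block_def by auto

lemma block_dim [simp]: "dim_row (block d M i j) = d" "dim_col (block d M i j) = d"
  unfolding block_def by auto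

lemma sesq_blocks:
  assumes "M \<in> carrier_mat (m*d) (m*d)"
  shows "sesq M u w = (\<Sum>i<m. \<Sum>j<m. sesq (block d M i j) (block_vec d u i) (block_vec d w j))"
proof -
  have "sesq M u w = (\<Sum>i<m. \<Sum>a<d. \<Sum>j<m. \<Sum>b<d. cnj (u $ (i*d+a)) * M $$ (i*d+a,j*d+b) * w $ (j*d+b))"
    unfolding sesq_def using assms by (simp add: sum_nat_blocks)
  also have "\<dots> = (\<Sum>i<m. \<Sum>j<m. \<Sum>a<d. \<Sum>b<d. cnj (u $ (i*d+a)) * M $$ (i*d+a,j*d+b) * w $ (j*d+b))"
    by (rule sum.cong[OF refl], rule sum.swap)
  also have "\<dots> = (\<Sum>i<m. \<Sum>j<m. sesq (block d M i j) (block_vec d u i) (block_vec d w j))"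
    unfolding sesq_def block_def block_vec_def by (intro sum.cong refl) auto
  finally show ?thesis .
qed

lemma mtrace_blocks:
  "M \<in> carrier_mat (m*d) (m*d) \<Longrightarrow> mtrace M = (\<Sum>i<m. mtrace (block d M i i))"
  unfolding mtrace_def by (simp add: sum_nat_blocks block_def)

lemma mtrace_mat_sum:
  assumes "\<And>k. k < m \<Longrightarrow> T k \<in> carrier_mat n n"
  shows "mtrace (mat n n (\<lambda>rc. \<Sum>k<m. c k * T k $$ rc)) = (\<Sum>k<m. c k * mtrace (T k))"
proof -
  have "mtrace (mat n n (\<lambda>rc. \<Sum>k<m. c k * T k $$ rc)) = (\<Sum>i<n. \<Sum>k<m. c k * T k $$ (i,i))"
    unfolding mtrace_def by simp
  also have "\<dots> = (\<Sum>k<m. \<Sum>i<n. c k * T k $$ (i,i))" by (rule sum.swap)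
  finally show ?thesis unfolding mtrace_def using assms by (auto simp: sum_distrib_left intro!: sum.cong)
qed

lemma kron_index:
  assumes "A \<in> carrier_mat m m" "B \<in> carrier_mat d d" "r < m*d" "c < m*d"
  shows "kron A B $$ (r,c) = A $$ (r div d, c div d) * B $$ (r mod d, c mod d)"
  using assms unfolding kron_def by auto

lemma mtrace_kron:
  assumes A: "A \<in> carrier_mat m m" and B: "B \<in> carrier_mat d d"
  shows "mtrace (kron A B) = mtrace A * mtrace B"
proof -
  have "kron A B \<in> carrier_mat (m*d) (m*d)" using A B unfolding kron_def by auto
  then have "mtrace (kron A B) = (\<Sum>i<m. \<Sum>a<d. A $$ (i,i) * B $$ (a,a))"
    unfolding mtrace_def using A B block_index_less by (simp add: sum_nat_blocks kron_index)
  then show ?thesis unfolding mtrace_def using A B by (simp add: sum_product)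
qed

lemma kron_carrier [simp]:
  "A \<in> carrier_mat m m \<Longrightarrow> B \<in> carrier_mat d d \<Longrightarrow> kron A B \<in> carrier_mat (m*d) (m*d)"
  unfolding kron_def by auto

lemma sesq_zero_mat [simp]: "sesq (0\<^sub>m n m) x y = 0"
  unfolding sesq_def by simp

section \<open>Incoherent-quantum states\<close>

lemma IQ_carrier_mtrace:
  assumes "\<sigma> \<in> IQ m d"
  shows "\<sigma> \<in> carrier_mat (m*d) (m*d)" "mtrace \<sigma> = 1"
proof -
  obtain n :: nat and p :: "nat \<Rightarrow> real" and s t where pst: "\<forall>k<n. 0 \<le> p k \<and> is_state m (s k) \<and> is_diagonal (s k) \<and> is_state d (t k)"
    "(\<Sum>k<n. p k) = 1" "\<sigma> = mat (m*d) (m*d) (\<lambda>rc. \<Sum>k<n. complex_of_real (p k) * kron (s k) (t k) $$ rc)"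
    using assms unfolding IQ_def by blast
  show "\<sigma> \<in> carrier_mat (m*d) (m*d)" using pst(3) by simp
  have "mtrace \<sigma> = (\<Sum>k<n. complex_of_real (p k) * mtrace (kron (s k) (t k)))"
    unfolding pst(3) by (rule mtrace_mat_sum) (use pst(1) in \<open>simp add: is_state_def\<close>)
  also have "\<dots> = (\<Sum>k<n. complex_of_real (p k))"
    using pst(1) mtrace_kron by (intro sum.cong) (auto simp: is_state_def)
  also have "\<dots> = 1" using pst(2) by (simp flip: of_real_sum)
  finally show "mtrace \<sigma> = 1" .
qed

lemma IQ_block_offdiag:
  assumes \<sigma>: "\<sigma> \<in> IQ m d" and ij: "i < m" "j < m" "i \<noteq> j"
  shows "block d \<sigma> i j = 0\<^sub>m d d"
proof -
  obtain n :: nat and p :: "nat \<Rightarrow> real" and s t where pst: "\<forall>k<n. 0 \<le> p k \<and> is_state m (s k) \<and> is_diagonal (s k) \<and> is_state d (t k)"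
    "\<sigma> = mat (m*d) (m*d) (\<lambda>rc. \<Sum>k<n. complex_of_real (p k) * kron (s k) (t k) $$ rc)"
    using \<sigma> unfolding IQ_def by blast
  have "kron (s k) (t k) $$ (i*d + a, j*d + c) = 0" if "k < n" "a < d" "c < d" for k a c
  proof -
    have st: "s k \<in> carrier_mat m m" "t k \<in> carrier_mat d d" "s k $$ (i,j) = 0"
      using pst(1) that ij unfolding is_state_def is_diagonal_def by auto
    show ?thesis
      using kron_index[OF st(1,2) block_index_less[of i m a d] block_index_less[of j m c d]] st(3) that ij by simp
  qed
  then show ?thesis
    unfolding block_def pst(2) using ij block_index_less by (intro eq_matI) auto
qed

definition block_diag :: "nat \<Rightarrow> nat \<Rightarrow> (nat \<Rightarrow> complex mat) \<Rightarrow> complex mat" where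
  "block_diag m d Y = mat (m*d) (m*d)
     (\<lambda>(r,c). if r div d = c div d then Y (r div d) $$ (r mod d, c mod d) else 0)"

lemma block_diag_carrier [simp]: "block_diag m d Y \<in> carrier_mat (m*d) (m*d)"
  unfolding block_diag_def by simp

lemma block_diag_dim [simp]: "dim_row (block_diag m d Y) = m*d" "dim_col (block_diag m d Y) = m*d"
  unfolding block_diag_def by simp_all

lemma block_block_diag:
  assumes "i < m" "j < m" "Y i \<in> carrier_mat d d"
  shows "block d (block_diag m d Y) i j = (if i = j then Y i else 0\<^sub>m d d)"
  using assms block_index_less[of i m _ d] block_index_less[of j m _ d]
  unfolding block_def block_diag_def by (intro eq_matI) auto

lemma smult_block_diag:
  assumes "\<forall>i<m. Y i \<in> carrier_mat d d"
  shows "c \<cdot>\<^sub>m block_diag m d Y = block_diag m d (\<lambda>i. c \<cdot>\<^sub>m Y i)"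
proof (rule eq_matI)
  fix r s assume "r < dim_row (block_diag m d (\<lambda>i. c \<cdot>\<^sub>m Y i))" "s < dim_col (block_diag m d (\<lambda>i. c \<cdot>\<^sub>m Y i))"
  then have "r < m*d" "s < m*d" by auto
  moreover from this have "r div d < m" "d > 0" using less_mult_imp_div_less by (auto intro: Nat.gr0I)
  ultimately show "(c \<cdot>\<^sub>m block_diag m d Y) $$ (r,s) = block_diag m d (\<lambda>i. c \<cdot>\<^sub>m Y i) $$ (r,s)"
    using assms unfolding block_diag_def by auto
qed auto

text \<open>Each block is a nonnegative multiple \<open>p\<^sub>i t\<^sub>i\<close> of a state, and the matrix is
  \<open>\<Sum>\<^sub>i p\<^sub>i |i\<rangle>\<langle>i| \<otimes> t\<^sub>i\<close>.\<close>

lemma block_diag_in_IQ: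
  assumes d: "0 < d" and Y: "\<forall>i<m. psd (Y i) \<and> Y i \<in> carrier_mat d d" and tr: "(\<Sum>i<m. mtrace (Y i)) = 1"
  shows "block_diag m d Y \<in> IQ m d"
proof -
  define p where "p i = Re (mtrace (Y i))" for i
  define s where "s i = dmat m (\<lambda>k. if k = i then 1 else 0)" for i
  have "\<forall>i\<in>{..<m}. \<exists>t. is_state d t \<and> Y i = complex_of_real (p i) \<cdot>\<^sub>m t"
    using psd_eq_smult_state[OF _ _ d] Y unfolding p_def by blast
  then obtain t where t: "\<forall>i\<in>{..<m}. is_state d (t i) \<and> Y i = complex_of_real (p i) \<cdot>\<^sub>m t i"
    by (auto dest!: bchoice)
  have "\<forall>k<m. 0 \<le> p k \<and> is_state m (s k) \<and> is_diagonal (s k) \<and> is_state d (t k)"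
  proof (intro allI impI conjI)
    fix k assume k: "k < m"
    show "0 \<le> p k" using psd_mtrace_nonneg Y k unfolding p_def by (auto simp: less_eq_complex_def)
    have "mtrace (s k) = 1" using k unfolding s_def mtrace_dmat by (simp add: sum.delta)
    then show "is_state m (s k)" unfolding s_def is_state_def by (auto intro: psd_dmat)
    show "is_diagonal (s k)" unfolding s_def is_diagonal_def dmat_def by auto
  qed (use t in auto)
  moreover have "(\<Sum>k<m. p k) = 1" unfolding p_def Re_sum[symmetric] tr by simp
  moreover have "block_diag m d Y = mat (m*d) (m*d) (\<lambda>rc. \<Sum>k<m. complex_of_real (p k) * kron (s k) (t k) $$ rc)"
  proof (rule eq_matI)
    fix r c assume "r < dim_row (mat (m*d) (m*d) (\<lambda>rc. \<Sum>k<m. complex_of_real (p k) * kron (s k) (t k) $$ rc))"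
      "c < dim_col (mat (m*d) (m*d) (\<lambda>rc. \<Sum>k<m. complex_of_real (p k) * kron (s k) (t k) $$ rc))"
    then have rc: "r < m*d" "c < m*d" by auto
    then have i: "r div d < m" "c div d < m" "r mod d < d" "c mod d < d"
      using d less_mult_imp_div_less by auto
    have "kron (s k) (t k) $$ (r,c) = (if r div d = k \<and> c div d = k then t k $$ (r mod d, c mod d) else 0)"
      if k: "k < m" for k
      using kron_index[of "s k" m "t k" d r c] t k rc i unfolding s_def dmat_def by (auto simp: is_state_def)
    then have "(\<Sum>k<m. complex_of_real (p k) * kron (s k) (t k) $$ (r,c)) =
        (\<Sum>k<m. if k = r div d then (if r div d = c div d then complex_of_real (p k) * t k $$ (r mod d, c mod d) else 0) else 0)"
      by (intro sum.cong refl) auto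
    also have "\<dots> = block_diag m d Y $$ (r,c)"
    proof -
      have "t (r div d) \<in> carrier_mat d d" "Y (r div d) = complex_of_real (p (r div d)) \<cdot>\<^sub>m t (r div d)"
        using t i(1) by (auto simp: is_state_def)
      then show ?thesis using i rc unfolding block_diag_def by auto
    qed
    finally show "block_diag m d Y $$ (r,c) = mat (m*d) (m*d) (\<lambda>rc. \<Sum>k<m. complex_of_real (p k) * kron (s k) (t k) $$ rc) $$ (r,c)"
      using rc by simp
  qed auto
  ultimately show ?thesis unfolding IQ_def by blast
qed

lemma C_max_eq_log:
  assumes T: "1 \<le> T"
    and lower: "\<And>\<sigma> c. \<sigma> \<in> IQ dA dB \<Longrightarrow> loewner_le \<rho> (complex_of_real c \<cdot>\<^sub>m \<sigma>) \<Longrightarrow> T \<le> c"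
    and \<sigma>0: "\<sigma>0 \<in> IQ dA dB" "loewner_le \<rho> (complex_of_real T \<cdot>\<^sub>m \<sigma>0)"
  shows "C_max dA dB \<rho> = ereal (log 2 T)"
proof -
  have pw: "2 powr log 2 T = T" using T by simp
  have "ereal (log 2 T) \<le> D_max \<rho> \<sigma>" if \<sigma>: "\<sigma> \<in> IQ dA dB" for \<sigma>
    unfolding D_max_def
  proof (rule Inf_greatest, clarify)
    fix l assume "0 \<le> l" "loewner_le \<rho> (complex_of_real (2 powr l) \<cdot>\<^sub>m \<sigma>)"
    then have "T \<le> 2 powr l" using lower[OF \<sigma>] by blast
    then have "log 2 T \<le> log 2 (2 powr l)" using T by (subst log_le_cancel_iff) auto
    then show "ereal (log 2 T) \<le> ereal l" by simp
  qed
  then have "ereal (log 2 T) \<le> C_max dA dB \<rho>" unfolding C_max_def by (intro Inf_greatest) auto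
  moreover have "D_max \<rho> \<sigma>0 \<le> ereal (log 2 T)"
    unfolding D_max_def using T \<sigma>0(2) pw by (intro Inf_lower) auto
  then have "C_max dA dB \<rho> \<le> ereal (log 2 T)"
    unfolding C_max_def using \<sigma>0(1) by (meson Inf_lower image_eqI order_trans)
  ultimately show ?thesis by simp
qed

text \<open>The key inequality of the upper bound: for positive \<open>Q\<^sub>i\<^sub>j = Q\<^sub>j\<^sub>i\<close>, twice the sum below equals
  \<open>\<Sum>\<^sub>i\<^sub>j \<langle>y\<^sub>i - y\<^sub>j, Q\<^sub>i\<^sub>j (y\<^sub>i - y\<^sub>j)\<rangle>\<close>.\<close>

lemma sesq_pairwise_nonneg:
  fixes Q :: "nat \<Rightarrow> nat \<Rightarrow> complex mat" and y :: "nat \<Rightarrow> complex vec"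
  assumes Q: "\<And>i j. i < m \<Longrightarrow> j < m \<Longrightarrow> psd (Q i j) \<and> Q i j \<in> carrier_mat d d"
    and sym: "\<And>i j. i < m \<Longrightarrow> j < m \<Longrightarrow> Q j i = Q i j"
    and y: "\<And>i. i < m \<Longrightarrow> y i \<in> carrier_vec d"
  shows "0 \<le> (\<Sum>i<m. \<Sum>j<m. sesq (Q i j) (y i) (y i) - sesq (Q i j) (y i) (y j))"
proof -
  define S where "S = (\<Sum>i<m. \<Sum>j<m. sesq (Q i j) (y i) (y i) - sesq (Q i j) (y i) (y j))"
  have expand: "sesq (Q i j) (y i - y j) (y i - y j) =
      sesq (Q i j) (y i) (y i) - sesq (Q i j) (y i) (y j) - sesq (Q i j) (y j) (y i) + sesq (Q i j) (y j) (y j)"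
    if "i < m" "j < m" for i j
  proof -
    have c: "y i \<in> carrier_vec (dim_row (Q i j))" "y j \<in> carrier_vec (dim_row (Q i j))"
      "y i \<in> carrier_vec (dim_col (Q i j))" "y j \<in> carrier_vec (dim_col (Q i j))"
      using Q[OF that] y[OF that(1)] y[OF that(2)] by auto
    show ?thesis unfolding sesq_minus_left[OF c(1,2)] sesq_minus_right[OF c(3,4)] by simp
  qed
  have swap: "(\<Sum>i<m. \<Sum>j<m. f i j) = (\<Sum>i<m. \<Sum>j<m. f j i)" for f :: "nat \<Rightarrow> nat \<Rightarrow> complex"
    by (rule sum.swap)
  have "(\<Sum>i<m. \<Sum>j<m. sesq (Q i j) (y j) (y j)) = (\<Sum>i<m. \<Sum>j<m. sesq (Q i j) (y i) (y i))"
    using sym by (subst swap) (auto intro!: sum.cong)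
  moreover have "(\<Sum>i<m. \<Sum>j<m. sesq (Q i j) (y j) (y i)) = (\<Sum>i<m. \<Sum>j<m. sesq (Q i j) (y i) (y j))"
    using sym by (subst swap) (auto intro!: sum.cong)
  ultimately have "(\<Sum>i<m. \<Sum>j<m. sesq (Q i j) (y i - y j) (y i - y j)) = 2 * S"
    unfolding S_def using expand by (simp add: sum.distrib sum_subtractf)
  moreover have "0 \<le> sesq (Q i j) (y i - y j) (y i - y j)" if "i < m" "j < m" for i j
    using psd_sesq_nonneg[of "Q i j" "y i - y j"] Q[OF that] y[OF that(1)] y[OF that(2)] by auto
  then have "0 \<le> (\<Sum>i<m. \<Sum>j<m. sesq (Q i j) (y i - y j) (y i - y j))"
    by (auto intro!: sum_nonneg)
  ultimately show ?thesis unfolding S_def by (simp add: less_eq_complex_def)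
qed

lemma sesq_block_diag:
  assumes "\<And>i. i < m \<Longrightarrow> Y i \<in> carrier_mat d d"
  shows "sesq (block_diag m d Y) u w = (\<Sum>i<m. sesq (Y i) (block_vec d u i) (block_vec d w i))"
  unfolding sesq_blocks[OF block_diag_carrier] using assms
  by (intro sum.cong refl) (simp add: block_block_diag if_distrib[of "\<lambda>M. sesq M _ _"] sum.delta cong: if_cong)

lemma mtrace_smult: "A \<in> carrier_mat n n \<Longrightarrow> mtrace (c \<cdot>\<^sub>m A) = c * mtrace A"
  unfolding mtrace_def by (simp add: sum_distrib_left)

lemma mtrace_mult_comm:
  assumes "(A::complex mat) \<in> carrier_mat n m" "B \<in> carrier_mat m n"
  shows "mtrace (A * B) = mtrace (B * A)"
proof -
  have "mtrace (A * B) = (\<Sum>i<n. \<Sum>k<m. A$$(i,k) * B$$(k,i))" unfolding mtrace_def using assms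
    by (auto simp: scalar_prod_def atLeast0LessThan intro!: sum.cong)
  also have "\<dots> = (\<Sum>k<m. \<Sum>i<n. B$$(k,i) * A$$(i,k))" by (subst sum.swap) (simp add: mult.commute)
  also have "\<dots> = mtrace (B * A)" unfolding mtrace_def using assms
    by (auto simp: scalar_prod_def atLeast0LessThan intro!: sum.cong)
  finally show ?thesis .
qed

lemma mtrace_unitary_conj:
  assumes V: "is_unitary n V" and A: "A \<in> carrier_mat n n"
  shows "mtrace (V * A * mat_adjoint V) = mtrace A"
proof -
  have Vc: "V \<in> carrier_mat n n" "mat_adjoint V \<in> carrier_mat n n" using V by (auto simp: is_unitary_def)
  have "mtrace (V * A * mat_adjoint V) = mtrace (mat_adjoint V * (V * A))"
    using Vc A by (intro mtrace_mult_comm[of _ n n]) auto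
  also have "mat_adjoint V * (V * A) = A"
    using assoc_mult_mat[OF Vc(2,1) A, symmetric] is_unitary_adjoint_mult[OF V] A by simp
  finally show ?thesis .
qed

lemma sum_sesq_adjoint_unit_vec:
  assumes V: "V \<in> carrier_mat d d" and X: "X \<in> carrier_mat d d" and W: "W \<in> carrier_mat d d"
  shows "(\<Sum>b<d. sesq X (mat_adjoint V *\<^sub>v unit_vec d b) (mat_adjoint W *\<^sub>v unit_vec d b))
    = mtrace (V * X * mat_adjoint W)"
proof -
  have "sesq X (mat_adjoint V *\<^sub>v unit_vec d b) (mat_adjoint W *\<^sub>v unit_vec d b) =
      sesq (V * X * mat_adjoint W) (unit_vec d b) (unit_vec d b)" for b
    using sesq_conj[of "mat_adjoint V" d d X d "mat_adjoint W" d "unit_vec d b" "unit_vec d b"] V X W by simp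
  moreover have "V * X * mat_adjoint W \<in> carrier_mat d d" using V X W by auto
  ultimately show ?thesis using mtrace_eq_sum_sesq by simp
qed

section \<open>States whose blocks are unitarily aligned with their absolute values\<close>

locale aligned_state =
  fixes dA dB :: nat and \<rho> :: "complex mat" and U :: "nat \<Rightarrow> complex mat"
  assumes dB_pos: "0 < dB"
    and state: "is_state (dA * dB) \<rho>"
    and unitary: "\<forall>i<dA. is_unitary dB (U i)"
    and aligned: "\<forall>i<dA. \<forall>j<dA. U i * block dB \<rho> i j * mat_adjoint (U j) = mat_abs (block dB \<rho> i j)"
begin

abbreviation abs_block :: "nat \<Rightarrow> nat \<Rightarrow> complex mat" where
  "abs_block i j \<equiv> mat_abs (block dB \<rho> i j)"

lemma rho_carrier: "\<rho> \<in> carrier_mat (dA*dB) (dA*dB)"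
  using state unfolding is_state_def by auto

lemma U_carrier: "i < dA \<Longrightarrow> U i \<in> carrier_mat dB dB" "i < dA \<Longrightarrow> mat_adjoint (U i) \<in> carrier_mat dB dB"
  using unitary unfolding is_unitary_def by auto

lemma abs_block_psd: "i < dA \<Longrightarrow> j < dA \<Longrightarrow> psd (abs_block i j) \<and> abs_block i j \<in> carrier_mat dB dB"
  using mat_abs_psd[OF block_carrier] by blast

lemma block_eq_conj_abs_block:
  assumes "i < dA" "j < dA"
  shows "block dB \<rho> i j = mat_adjoint (U i) * abs_block i j * U j"
proof -
  have "mat_adjoint (U i) * (U i * block dB \<rho> i j * mat_adjoint (U j)) * U j =
      (mat_adjoint (U i) * U i) * block dB \<rho> i j * (mat_adjoint (U j) * U j)"
    using U_carrier assms by (simp add: assoc_mult_mat[of _ dB dB _ dB _ dB] mult_carrier_mat[of _ dB dB])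
  moreover have "mat_adjoint (U i) * U i = 1\<^sub>m dB" "mat_adjoint (U j) * U j = 1\<^sub>m dB"
    using unitary assms is_unitary_adjoint_mult by auto
  ultimately show ?thesis using aligned assms by simp
qed

lemma abs_block_sym:
  assumes i: "i < dA" and j: "j < dA"
  shows "abs_block j i = abs_block i j"
proof -
  have herm: "\<rho> $$ (r,c) = cnj (\<rho> $$ (c,r))" if "r < dA*dB" "c < dA*dB" for r c
    using arg_cong[OF psd_hermitian[of \<rho>], of "\<lambda>M. M $$ (r,c)"] state rho_carrier that
    unfolding is_state_def by auto
  have blk: "block dB \<rho> j i = mat_adjoint (block dB \<rho> i j)"
  proof (rule eq_matI)
    fix a b assume "a < dim_row (mat_adjoint (block dB \<rho> i j))" "b < dim_col (mat_adjoint (block dB \<rho> i j))"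
    then have ab: "a < dB" "b < dB" by auto
    then show "block dB \<rho> j i $$ (a,b) = mat_adjoint (block dB \<rho> i j) $$ (a,b)"
      using herm[OF block_index_less[OF j ab(1)] block_index_less[OF i ab(2)]] unfolding block_def by simp
  qed auto
  have "abs_block j i = U j * block dB \<rho> j i * mat_adjoint (U i)" using aligned i j by simp
  also have "\<dots> = mat_adjoint (U i * block dB \<rho> i j * mat_adjoint (U j))"
    unfolding blk using mat_adjoint_mult3[OF U_carrier(1)[OF i] block_carrier U_carrier(2)[OF j]] by simp
  also have "\<dots> = mat_adjoint (abs_block i j)" using aligned i j by simp
  also have "\<dots> = abs_block i j" using psd_hermitian abs_block_psd[OF i j] by blast
  finally show ?thesis .
qed

lemma mtrace_abs_block:
  assumes "i < dA" "j < dA"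
  shows "mtrace (abs_block i j) = complex_of_real (trace_norm (block dB \<rho> i j))"
  using psd_mtrace_nonneg[of "abs_block i j" dB] abs_block_psd[OF assms]
  unfolding trace_norm_def by (simp add: less_eq_complex_def complex_eq_iff)

lemma C_l1_nonneg: "0 \<le> C_l1 dA dB \<rho>"
proof -
  have "0 \<le> trace_norm (block dB \<rho> i j)" if "i < dA" "j < dA" for i j
    using psd_mtrace_nonneg[of "abs_block i j" dB] abs_block_psd[OF that]
    unfolding trace_norm_def by (simp add: less_eq_complex_def)
  then show ?thesis unfolding C_l1_def by (auto intro!: sum_nonneg)
qed

lemma sum_mtrace_abs_block: "(\<Sum>i<dA. \<Sum>j<dA. mtrace (abs_block i j)) = complex_of_real (1 + C_l1 dA dB \<rho>)"
proof -
  have diag: "mtrace (abs_block i i) = mtrace (block dB \<rho> i i)" if "i < dA" for i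
  proof -
    have "mtrace (U i * block dB \<rho> i i * mat_adjoint (U i)) = mtrace (block dB \<rho> i i)"
      by (rule mtrace_unitary_conj) (use unitary that in auto)
    then show ?thesis using aligned that by simp
  qed
  have "(\<Sum>i<dA. \<Sum>j<dA. mtrace (abs_block i j)) =
      (\<Sum>i<dA. mtrace (abs_block i i) + (\<Sum>j\<in>{..<dA} - {i}. mtrace (abs_block i j)))"
    by (intro sum.cong refl) (simp add: sum.remove)
  also have "\<dots> = mtrace \<rho> + complex_of_real (C_l1 dA dB \<rho>)"
    unfolding mtrace_blocks[OF rho_carrier] C_l1_def using diag mtrace_abs_block
    by (simp add: sum.distrib of_real_sum)
  finally show ?thesis using state by (simp add: is_state_def)
qed

text \<open>The test vectors \<open>\<Sum>\<^sub>i |i\<rangle> \<otimes> U\<^sub>i\<^sup>\<dagger> |b\<rangle>\<close>: summed over \<open>b\<close>, they read off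
  \<open>\<Sum>\<^sub>i\<^sub>j tr |\<rho>\<^sub>i\<^sub>j|\<close> from \<open>\<rho>\<close> but only the trace from an incoherent-quantum state.\<close>

definition probe :: "nat \<Rightarrow> complex vec" where
  "probe b = vec (dA*dB) (\<lambda>r. cnj (U (r div dB) $$ (b, r mod dB)))"

lemma block_vec_probe:
  assumes i: "i < dA" and b: "b < dB"
  shows "block_vec dB (probe b) i = mat_adjoint (U i) *\<^sub>v unit_vec dB b"
  using U_carrier[OF i] b block_index_less[OF i]
  unfolding block_vec_def probe_def by (intro eq_vecI) auto

lemma sum_sesq_probe:
  assumes M: "M \<in> carrier_mat (dA*dB) (dA*dB)"
  shows "(\<Sum>b<dB. sesq M (probe b) (probe b)) =
    (\<Sum>i<dA. \<Sum>j<dA. mtrace (U i * block dB M i j * mat_adjoint (U j)))"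
proof -
  have "(\<Sum>b<dB. sesq M (probe b) (probe b)) = (\<Sum>b<dB. \<Sum>i<dA. \<Sum>j<dA.
      sesq (block dB M i j) (mat_adjoint (U i) *\<^sub>v unit_vec dB b) (mat_adjoint (U j) *\<^sub>v unit_vec dB b))"
    using sesq_blocks[OF M] block_vec_probe by (intro sum.cong refl) auto
  also have "\<dots> = (\<Sum>i<dA. \<Sum>j<dA. \<Sum>b<dB.
      sesq (block dB M i j) (mat_adjoint (U i) *\<^sub>v unit_vec dB b) (mat_adjoint (U j) *\<^sub>v unit_vec dB b))"
    by (subst sum.swap, rule sum.cong[OF refl], rule sum.swap)
  also have "\<dots> = (\<Sum>i<dA. \<Sum>j<dA. mtrace (U i * block dB M i j * mat_adjoint (U j)))"
    using sum_sesq_adjoint_unit_vec[OF U_carrier(1) block_carrier U_carrier(1)] by simp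
  finally show ?thesis .
qed

lemma IQ_lower_bound:
  assumes \<sigma>: "\<sigma> \<in> IQ dA dB" and le: "loewner_le \<rho> (complex_of_real c \<cdot>\<^sub>m \<sigma>)"
  shows "1 + C_l1 dA dB \<rho> \<le> c"
proof -
  note \<sigma>c = IQ_carrier_mtrace[OF \<sigma>]
  have "mtrace (U i * block dB \<sigma> i j * mat_adjoint (U j)) = (if j = i then mtrace (block dB \<sigma> i i) else 0)"
    if ij: "i < dA" "j < dA" for i j
  proof (cases "j = i")
    case True
    then show ?thesis using mtrace_unitary_conj[OF _ block_carrier] unitary ij by simp
  next
    case False
    have "U i * 0\<^sub>m dB dB * mat_adjoint (U j) = 0\<^sub>m dB dB"
      using right_mult_zero_mat[OF U_carrier(1)[OF ij(1)]] left_mult_zero_mat[OF U_carrier(2)[OF ij(2)]] by simp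
    then show ?thesis using IQ_block_offdiag[OF \<sigma> ij] False by (simp add: mtrace_def)
  qed
  then have "(\<Sum>b<dB. sesq \<sigma> (probe b) (probe b)) = (\<Sum>i<dA. mtrace (block dB \<sigma> i i))"
    unfolding sum_sesq_probe[OF \<sigma>c(1)] by (simp add: sum.delta)
  also have "\<dots> = 1" using \<sigma>c mtrace_blocks by simp
  finally have sum\<sigma>: "(\<Sum>b<dB. sesq \<sigma> (probe b) (probe b)) = 1" .
  have sum\<rho>: "(\<Sum>b<dB. sesq \<rho> (probe b) (probe b)) = complex_of_real (1 + C_l1 dA dB \<rho>)"
    unfolding sum_sesq_probe[OF rho_carrier] using aligned sum_mtrace_abs_block by simp
  have "psd (complex_of_real c \<cdot>\<^sub>m \<sigma> - \<rho>)" using le unfolding loewner_le_def by simp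
  then have "0 \<le> (\<Sum>b<dB. sesq (complex_of_real c \<cdot>\<^sub>m \<sigma> - \<rho>) (probe b) (probe b))"
    using \<sigma>c(1) rho_carrier by (intro sum_nonneg) (simp add: psd_sesq_nonneg probe_def)
  also have "\<dots> = complex_of_real (c - (1 + C_l1 dA dB \<rho>))"
    using \<sigma>c(1) rho_carrier sum\<sigma> sum\<rho>
    by (simp add: sesq_mat_minus[of _ "dA*dB" "dA*dB"] sesq_mat_smult sum_subtractf sum_distrib_left[symmetric])
  finally show ?thesis by (simp add: less_eq_complex_def)
qed

text \<open>The optimal state is \<open>\<sigma>\<^sub>0 \<propto> \<Sum>\<^sub>i |i\<rangle>\<langle>i| \<otimes> row_block i\<close>.\<close>

definition row_block :: "nat \<Rightarrow> complex mat" where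
  "row_block i = mat_adjoint (U i) * mat dB dB (\<lambda>ac. \<Sum>j<dA. abs_block i j $$ ac) * U i"

lemma row_block_psd:
  assumes i: "i < dA"
  shows "psd (row_block i)" "row_block i \<in> carrier_mat dB dB"
proof -
  have "psd (mat dB dB (\<lambda>ac. \<Sum>j<dA. abs_block i j $$ ac))"
    by (rule psd_mat_sum) (use abs_block_psd i in auto)
  then show "psd (row_block i)" unfolding row_block_def using psd_conj[OF _ mat_carrier U_carrier(1)[OF i]] by simp
  show "row_block i \<in> carrier_mat dB dB" unfolding row_block_def
    using mult_carrier_mat[OF mult_carrier_mat[OF U_carrier(2)[OF i] mat_carrier] U_carrier(1)[OF i]] .
qed

lemma sum_mtrace_row_block: "(\<Sum>i<dA. mtrace (row_block i)) = complex_of_real (1 + C_l1 dA dB \<rho>)"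
proof -
  have "mtrace (row_block i) = (\<Sum>j<dA. mtrace (abs_block i j))" if i: "i < dA" for i
  proof -
    have "mtrace (row_block i) = mtrace (mat dB dB (\<lambda>ac. \<Sum>j<dA. abs_block i j $$ ac))"
      unfolding row_block_def using mtrace_unitary_conj[OF is_unitary_adjoint, of dB "U i"] unitary i by simp
    also have "\<dots> = (\<Sum>j<dA. mtrace (abs_block i j))"
      using mtrace_mat_sum[of dA "abs_block i" dB "\<lambda>_. 1"] abs_block_psd i by simp
    finally show ?thesis .
  qed
  then show ?thesis using sum_mtrace_abs_block by simp
qed

lemma row_blocks_dominate: "psd (block_diag dA dB row_block - \<rho>)"
proof -
  have D: "block_diag dA dB row_block - \<rho> \<in> carrier_mat (dA*dB) (dA*dB)" using rho_carrier by auto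
  have "0 \<le> sesq (block_diag dA dB row_block - \<rho>) v v" if v: "v \<in> carrier_vec (dA*dB)" for v
  proof -
    define y where "y i = U i *\<^sub>v block_vec dB v i" for i
    have y: "y i \<in> carrier_vec dB" if "i < dA" for i
      unfolding y_def using U_carrier(1)[OF that] by simp
    have "sesq (row_block i) (block_vec dB v i) (block_vec dB v i) = (\<Sum>j<dA. sesq (abs_block i j) (y i) (y i))"
      if i: "i < dA" for i
    proof -
      have "sesq (row_block i) (block_vec dB v i) (block_vec dB v i) =
          sesq (mat dB dB (\<lambda>ac. \<Sum>j<dA. abs_block i j $$ ac)) (y i) (y i)"
        unfolding row_block_def y_def
        by (rule sesq_conj[OF U_carrier(1)[OF i] mat_carrier U_carrier(1)[OF i] block_vec_carrier block_vec_carrier])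
      also have "\<dots> = (\<Sum>j<dA. sesq (abs_block i j) (y i) (y i))"
        using sesq_mat_sum[of dA "abs_block i" dB "\<lambda>_. 1" "y i" "y i"] abs_block_psd i by simp
      finally show ?thesis .
    qed
    then have diag: "sesq (block_diag dA dB row_block) v v = (\<Sum>i<dA. \<Sum>j<dA. sesq (abs_block i j) (y i) (y i))"
      using sesq_block_diag[of dA row_block dB v v] row_block_psd(2) by simp
    have "sesq (block dB \<rho> i j) (block_vec dB v i) (block_vec dB v j) = sesq (abs_block i j) (y i) (y j)"
      if ij: "i < dA" "j < dA" for i j
      unfolding y_def using abs_block_psd[OF ij]
      by (subst block_eq_conj_abs_block[OF ij]) (intro sesq_conj[OF U_carrier(1)[OF ij(1)] _ U_carrier(1)[OF ij(2)]], auto)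
    then have "sesq \<rho> v v = (\<Sum>i<dA. \<Sum>j<dA. sesq (abs_block i j) (y i) (y j))"
      unfolding sesq_blocks[OF rho_carrier] by simp
    with diag have "sesq (block_diag dA dB row_block - \<rho>) v v =
        (\<Sum>i<dA. \<Sum>j<dA. sesq (abs_block i j) (y i) (y i) - sesq (abs_block i j) (y i) (y j))"
      using rho_carrier by (simp add: sesq_mat_minus[of _ "dA*dB" "dA*dB"] sum_subtractf)
    also have "0 \<le> \<dots>" by (rule sesq_pairwise_nonneg) (use abs_block_psd abs_block_sym y in auto)
    finally show ?thesis .
  qed
  then show ?thesis using D psd_iff_sesq[of _ "dA*dB"] by auto
qed

lemma IQ_upper_witness: "\<exists>\<sigma>\<in>IQ dA dB. loewner_le \<rho> (complex_of_real (1 + C_l1 dA dB \<rho>) \<cdot>\<^sub>m \<sigma>)"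
proof
  define T where "T = 1 + C_l1 dA dB \<rho>"
  have T: "T > 0" unfolding T_def using C_l1_nonneg by simp
  define \<sigma> where "\<sigma> = block_diag dA dB (\<lambda>i. complex_of_real (1 / T) \<cdot>\<^sub>m row_block i)"
  have "(\<Sum>i<dA. mtrace (complex_of_real (1 / T) \<cdot>\<^sub>m row_block i)) =
      complex_of_real (1 / T) * (\<Sum>i<dA. mtrace (row_block i))"
    unfolding sum_distrib_left using mtrace_smult[OF row_block_psd(2)] by simp
  also have "\<dots> = 1"
  proof -
    have "complex_of_real T \<noteq> 0" using T by simp
    then show ?thesis using sum_mtrace_row_block unfolding T_def by (simp add: field_simps)
  qed
  finally have "(\<Sum>i<dA. mtrace (complex_of_real (1 / T) \<cdot>\<^sub>m row_block i)) = 1" .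
  moreover have "psd (complex_of_real (1 / T) \<cdot>\<^sub>m row_block i)" if "i < dA" for i
    by (rule psd_smult[OF row_block_psd(1)[OF that]]) (use T in simp)
  ultimately show "\<sigma> \<in> IQ dA dB" unfolding \<sigma>_def
    using row_block_psd(2) by (intro block_diag_in_IQ dB_pos) auto
  have "complex_of_real T \<cdot>\<^sub>m \<sigma> = block_diag dA dB row_block"
    unfolding \<sigma>_def using row_block_psd(2) T by (subst smult_block_diag) (auto intro!: arg_cong[of _ _ "block_diag dA dB"] eq_matI)
  then show "loewner_le \<rho> (complex_of_real (1 + C_l1 dA dB \<rho>) \<cdot>\<^sub>m \<sigma>)"
    unfolding loewner_le_def T_def[symmetric] using row_blocks_dominate rho_carrier by simp
qed

end

theorem proposition9:
  fixes dA dB :: nat and \<rho> :: "complex mat" and U :: "nat \<Rightarrow> complex mat"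
  assumes "0 < dA" and "0 < dB"
    and "is_state (dA * dB) \<rho>"
    and "\<forall>i<dA. is_unitary dB (U i)"
    and "\<forall>i<dA. \<forall>j<dA. U i * block dB \<rho> i j * mat_adjoint (U j) = mat_abs (block dB \<rho> i j)"
  shows "C_max dA dB \<rho> = ereal (log 2 (1 + C_l1 dA dB \<rho>))"
proof -
  interpret aligned_state dA dB \<rho> U using assms(2-5) by unfold_locales
  obtain \<sigma>0 where "\<sigma>0 \<in> IQ dA dB" "loewner_le \<rho> (complex_of_real (1 + C_l1 dA dB \<rho>) \<cdot>\<^sub>m \<sigma>0)"
    using IQ_upper_witness by blast
  then show ?thesis using C_max_eq_log C_l1_nonneg IQ_lower_bound by simp
qed

end
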